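(* Let $(X^{(1)}_j)_{j\ge1}$ and $(X^{(2)}_j)_{j\ge1}$ be two independent i.i.d. families of $\mathbb{Z}^2$-valued random variables, each with mean zero and identity covariance, and assume $E[H(|X^{(i)}_1|)]<\infty$ for some continuous increasing $H\colon[0,\infty)\to(0,\infty)$ with $\lim_{n\to\infty}\log H(n)/\log n=\infty$. Let $\tau=\log n$, $T_\tau=n/\log n$, and consider the rescaled walks $S^{(i)}_m=T_\tau^{-1/2}\sum_{j=1}^mX^{(i)}_j$ on $T_\tau^{-1/2}\mathbb{Z}^2$ started at the origin, with law $P$. For $\eta>0$ and $k\in\{1,2\}$ let $B^{(k)}=\{(z_1,z_2)\in T_\tau^{-1/2}\mathbb{Z}^2: z_k=\eta(a+1/2)\text{ for some }a\in\mathbb{Z}\}$, and for $x$ let $B^{(k)}(x)$ be the set of points whose $k$-th coordinate equals that of $x$. Define $T^{i,(k)}_1=\inf\{m>0:S^{(i)}_m\in B^{(k)}\}$ and $T^{i,(k)}_j=\inf\{m>T^{i,(k)}_{j-1}: S^{(i)}_m\in B^{(k)},\ B^{(k)}(S^{(i)}_m)\ne B^{(k)}(S^{(i)}_{T^{i,(k)}_{j-1}})\}$. Let $C^{(k)}_n(\eta)=\sum_{i=1}^2\#\{j\ge1: T^{i,(k)}_j\le n\}$ be the total number of crossings in direction $k$ by both walks up to time $n$, and $C_n(\eta)=C^{(1)}_n(\eta)+C^{(2)}_n(\eta)$. Then for every $M>0$, $$\limsup_{\eta\to\infty}\limsup_{n\to\infty}\frac1\tau\log P\Big(C_n(\eta)>\frac{2M\tau}{\eta}\Big)\le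 -C(M),$$ for some constants $C(M)$ satisfying $\lim_{M\to\infty}C(M)=\infty$. *)

theory Defs
  imports "HOL-Probability.Probability" "HOL-Library.Extended_Nat"
begin

definition coordk :: "nat \<Rightarrow> real \<times> real \<Rightarrow> real" where
  "coordk k z = (if k = 1 then fst z else snd z)"

definition onB :: "real \<Rightarrow> nat \<Rightarrow> real \<times> real \<Rightarrow> bool" where
  "onB \<eta> k z \<longleftrightarrow> (\<exists>a::int. coordk k z = \<eta> * (real_of_int a + 1/2))"

text \<open>crossT s eta k j is the crossing time T_(j+1) of the path s (infimum of the empty set = infinity).\<close>
fun crossT :: "(nat \<Rightarrow> real \<times> real) \<Rightarrow> real \<Rightarrow> nat \<Rightarrow> nat \<Rightarrow> enat" where
  "crossT s \<eta> k 0 =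
     (if \<exists>m>0. onB \<eta> k (s m) then enat (LEAST m. m > 0 \<and> onB \<eta> k (s m)) else \<infinity>)"
| "crossT s \<eta> k (Suc j) =
     (case crossT s \<eta> k j of
        \<infinity> \<Rightarrow> \<infinity>
      | enat t \<Rightarrow>
          (if \<exists>m>t. onB \<eta> k (s m) \<and> coordk k (s m) \<noteq> coordk k (s t)
           then enat (LEAST m. m > t \<and> onB \<eta> k (s m) \<and> coordk k (s m) \<noteq> coordk k (s t))
           else \<infinity>))"

definition crossings :: "(nat \<Rightarrow> real \<times> real) \<Rightarrow> real \<Rightarrow> nat \<Rightarrow> nat \<Rightarrow> nat" where
  "crossings s \<eta> k n = card {j. crossT s \<eta> k j \<le> enat n}"

definition rwalk :: "real \<Rightarrow> (nat \<Rightarrow> 'a \<Rightarrow> int \<times> int) \<Rightarrow> nat \<Rightarrow> 'a \<Rightarrow> real \<times> real" where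
  "rwalk Tt Y m \<omega> =
     ((\<Sum>j\<in>{1..m}. real_of_int (fst (Y j \<omega>))) / sqrt Tt,
      (\<Sum>j\<in>{1..m}. real_of_int (snd (Y j \<omega>))) / sqrt Tt)"

definition Ctot :: "(nat \<Rightarrow> nat \<Rightarrow> 'a \<Rightarrow> int \<times> int) \<Rightarrow> real \<Rightarrow> nat \<Rightarrow> 'a \<Rightarrow> nat" where
  "Ctot X \<eta> n \<omega> =
     (\<Sum>k\<in>{1,2}. \<Sum>i\<in>{1,2}. crossings (\<lambda>m. rwalk (real n / ln (real n)) (X i) m \<omega>) \<eta> k n)"

definition elog :: "real \<Rightarrow> ereal" where
  "elog p = (if p = 0 then -\<infinity> else ereal (ln p))"

end

theory Submission
  imports Defs "HOL-Real_Asymp.Real_Asymp"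
begin

(*
  Two consecutive crossing times in direction k happen on different lines of B^(k), which are
  eta apart, so in between the unscaled k-th coordinate of the walk moves by at least
  eta sqrt T = 2R.  Hence the crossings are dominated by the restarts of the walk that adds the
  increments but jumps back to 0 as soon as it would leave (-R, R).  If the increments are bounded,
  cosh (theta x) cosh (theta R)^c (position x, c restarts) grows in expectation by at most
  mu = max E exp (+-theta xi) per step, and Markov's inequality gives
  P (c_n >= K) <= mu^n / cosh (theta R)^K.  Truncating the increments at b = sqrt T / lambda and
  taking theta = lambda / sqrt T, lambda = M / 8, the factor mu^n is at most e n^(M^2/64), while
  K ~ M log n / (2 eta) restarts cost about n^(-M^2/32) once eta >= 64 / M.  Some increment
  exceeds b with probability at most n E H(|X|) / H b, which decays faster than any power of n
  because H grows superpolynomially.  Altogether P (C_n(eta) > 2 M tau / eta) <= n^(-M^2/256)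
  for large n, i.e. C(M) = M^2 / 256.
*)

section \<open>Restarted walks and crossings\<close>

fun reset_walk :: "(nat \<Rightarrow> int) \<Rightarrow> real \<Rightarrow> nat \<Rightarrow> int \<times> nat" where
  "reset_walk \<xi> R 0 = (0, 0)"
| "reset_walk \<xi> R (Suc t) =
     (if R \<le> \<bar>real_of_int (fst (reset_walk \<xi> R t) + \<xi> (Suc t))\<bar>
      then (0, Suc (snd (reset_walk \<xi> R t)))
      else (fst (reset_walk \<xi> R t) + \<xi> (Suc t), snd (reset_walk \<xi> R t)))"

lemma reset_walk_cong:
  "(\<And>j. 1 \<le> j \<Longrightarrow> j \<le> t \<Longrightarrow> \<xi> j = \<xi>' j) \<Longrightarrow> reset_walk \<xi> R t = reset_walk \<xi>' R t"
  by (induction t) auto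

lemma reset_count_mono: "t \<le> t' \<Longrightarrow> snd (reset_walk \<xi> R t) \<le> snd (reset_walk \<xi> R t')"
  by (rule lift_Suc_mono_le[of "\<lambda>t. snd (reset_walk \<xi> R t)"]) auto

lemma reset_count_le: "snd (reset_walk \<xi> R t) \<le> t"
  by (induction t) auto

lemma abs_reset_pos_less: "R > 0 \<Longrightarrow> \<bar>real_of_int (fst (reset_walk \<xi> R t))\<bar> < R"
  by (induction t) auto

lemma reset_pos_eq_sum:
  assumes "t \<le> t'" and "snd (reset_walk \<xi> R t') = snd (reset_walk \<xi> R t)"
  shows "fst (reset_walk \<xi> R t') = fst (reset_walk \<xi> R t) + (\<Sum>j\<in>{Suc t..t'}. \<xi> j)"
  using assms
proof (induction t' rule: dec_induct)
  case (step m)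
  have "snd (reset_walk \<xi> R m) \<le> snd (reset_walk \<xi> R (Suc m))" by (rule reset_count_mono) simp
  then have same: "snd (reset_walk \<xi> R m) = snd (reset_walk \<xi> R t)"
    using reset_count_mono[OF step(1), of \<xi> R] step(4) by linarith
  then have "\<not> R \<le> \<bar>real_of_int (fst (reset_walk \<xi> R m) + \<xi> (Suc m))\<bar>"
    using step(4) by (auto split: if_splits)
  moreover have "{Suc t..Suc m} = insert (Suc m) {Suc t..m}" using step(1) by auto
  ultimately show ?case using step(3)[OF same] by simp
qed simp

lemma reset_count_less:
  assumes "t \<le> t'" "R > 0" "2 * R \<le> \<bar>real_of_int (\<Sum>j\<in>{Suc t..t'}. \<xi> j)\<bar>"
  shows "snd (reset_walk \<xi> R t) < snd (reset_walk \<xi> R t')"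
proof (rule ccontr)
  assume "\<not> ?thesis"
  then have "snd (reset_walk \<xi> R t') = snd (reset_walk \<xi> R t)"
    using reset_count_mono[OF assms(1), of \<xi> R] by linarith
  from reset_pos_eq_sum[OF assms(1) this]
  have "real_of_int (\<Sum>j\<in>{Suc t..t'}. \<xi> j)
          = real_of_int (fst (reset_walk \<xi> R t')) - real_of_int (fst (reset_walk \<xi> R t))"
    by simp
  then show False
    using abs_reset_pos_less[OF assms(2), of \<xi> t] abs_reset_pos_less[OF assms(2), of \<xi> t'] assms(3)
    by linarith
qed

lemma reset_count_ge_chain:
  assumes "R > 0"
    and "\<And>j. j < K \<Longrightarrow> \<tau> j < \<tau> (Suc j) \<and> 2 * R \<le> \<bar>real_of_int (\<Sum>i\<in>{Suc (\<tau> j)..\<tau> (Suc j)}. \<xi> i)\<bar>"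
  shows "K \<le> snd (reset_walk \<xi> R (\<tau> K))"
  using assms(2)
proof (induction K)
  case (Suc K)
  have "K \<le> snd (reset_walk \<xi> R (\<tau> K))" using Suc by auto
  moreover have "snd (reset_walk \<xi> R (\<tau> K)) < snd (reset_walk \<xi> R (\<tau> (Suc K)))"
    using Suc.prems[of K] by (intro reset_count_less[OF _ assms(1)]) auto
  ultimately show ?case by linarith
qed simp

lemma crossT_0_enatD:
  assumes "crossT s \<eta> k 0 = enat t"
  shows "0 < t \<and> onB \<eta> k (s t)"
proof -
  have "t = (LEAST m. 0 < m \<and> onB \<eta> k (s m))" and "\<exists>m. 0 < m \<and> onB \<eta> k (s m)"
    using assms by (auto split: if_splits)
  then show ?thesis using LeastI_ex[of "\<lambda>m. 0 < m \<and> onB \<eta> k (s m)"] by simp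
qed

lemma crossT_Suc_enatD:
  assumes "crossT s \<eta> k (Suc j) = enat t'"
  shows "\<exists>t. crossT s \<eta> k j = enat t \<and> t < t' \<and> onB \<eta> k (s t') \<and> coordk k (s t') \<noteq> coordk k (s t)"
proof (cases "crossT s \<eta> k j")
  case (enat t)
  let ?P = "\<lambda>m. m > t \<and> onB \<eta> k (s m) \<and> coordk k (s m) \<noteq> coordk k (s t)"
  have "t' = (LEAST m. ?P m)" and "\<exists>m. ?P m"
    using assms enat by (auto split: if_splits)
  then have "?P t'" using LeastI_ex[of ?P] by simp
  then show ?thesis using enat by auto
qed (use assms in simp)

lemma crossT_mono: "i \<le> j \<Longrightarrow> crossT s \<eta> k i \<le> crossT s \<eta> k j"
proof (rule lift_Suc_mono_le[of "crossT s \<eta> k"])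
  show "crossT s \<eta> k n \<le> crossT s \<eta> k (Suc n)" for n
  proof (cases "crossT s \<eta> k (Suc n)")
    case (enat t')
    then show ?thesis using crossT_Suc_enatD[OF enat] by (auto simp del: crossT.simps)
  qed simp
qed

lemma crossT_le_if_crossings:
  assumes "Suc K \<le> crossings s \<eta> k n"
  shows "crossT s \<eta> k K \<le> enat n"
proof (rule ccontr)
  assume late: "\<not> crossT s \<eta> k K \<le> enat n"
  have "{j. crossT s \<eta> k j \<le> enat n} \<subseteq> {..<K}"
  proof safe
    fix j assume "crossT s \<eta> k j \<le> enat n"
    then show "j < K" using late crossT_mono[of K j s \<eta> k] by (meson not_le order_trans)
  qed
  then have "crossings s \<eta> k n \<le> K"
    unfolding crossings_def using card_mono[of "{..<K}"] by fastforce
  then show False using assms by simp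
qed

lemma onB_coordk_diff_ge:
  assumes "\<eta> > 0" "onB \<eta> k z" "onB \<eta> k w" "coordk k z \<noteq> coordk k w"
  shows "\<eta> \<le> \<bar>coordk k z - coordk k w\<bar>"
proof -
  obtain a c :: int where a: "coordk k z = \<eta> * (real_of_int a + 1/2)"
    and c: "coordk k w = \<eta> * (real_of_int c + 1/2)"
    using assms(2,3) unfolding onB_def by blast
  have "1 \<le> \<bar>real_of_int a - real_of_int c\<bar>" using a c assms(4) by auto
  then have "\<eta> * 1 \<le> \<eta> * \<bar>real_of_int a - real_of_int c\<bar>"
    using assms(1) by (intro mult_left_mono) auto
  also have "\<dots> = \<bar>\<eta> * (real_of_int a - real_of_int c)\<bar>"
    using assms(1) by (simp add: abs_mult)
  also have "\<dots> = \<bar>coordk k z - coordk k w\<bar>"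
    using a c by (simp add: algebra_simps)
  finally show ?thesis by simp
qed

lemma crossing_times_exist:
  assumes "Suc K \<le> crossings s \<eta> k n"
  obtains \<tau> where "\<tau> K \<le> n" and "\<And>j. j \<le> K \<Longrightarrow> onB \<eta> k (s (\<tau> j))"
    and "\<And>j. j < K \<Longrightarrow> \<tau> j < \<tau> (Suc j) \<and> coordk k (s (\<tau> (Suc j))) \<noteq> coordk k (s (\<tau> j))"
proof
  define \<tau> where "\<tau> j = the_enat (crossT s \<eta> k j)" for j
  have le: "crossT s \<eta> k j \<le> enat n" if "j \<le> K" for j
    using crossT_mono[OF that] crossT_le_if_crossings[OF assms] by (rule order_trans)
  have \<tau>: "crossT s \<eta> k j = enat (\<tau> j)" if "j \<le> K" for j
    using le[OF that] unfolding \<tau>_def by (cases "crossT s \<eta> k j") auto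
  show "\<tau> K \<le> n" using le[of K] \<tau>[of K] by simp
  show "onB \<eta> k (s (\<tau> j))" if "j \<le> K" for j
    using that \<tau>[OF that] crossT_0_enatD[of s \<eta> k] crossT_Suc_enatD[of s \<eta> k]
    by (cases j) (auto simp del: crossT.simps)
  show "\<tau> j < \<tau> (Suc j) \<and> coordk k (s (\<tau> (Suc j))) \<noteq> coordk k (s (\<tau> j))" if "j < K" for j
    using crossT_Suc_enatD[OF \<tau>[of "Suc j"]] \<tau>[of j] that by auto
qed

definition coordk_int :: "nat \<Rightarrow> int \<times> int \<Rightarrow> int" where
  "coordk_int k p = (if k = 1 then fst p else snd p)"

lemma coordk_rwalk:
  "coordk k (rwalk Tt Y m \<omega>) = real_of_int (\<Sum>j\<in>{1..m}. coordk_int k (Y j \<omega>)) / sqrt Tt"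
  unfolding coordk_def rwalk_def coordk_int_def by auto

lemma abs_coordk_int_le_norm:
  "\<bar>real_of_int (coordk_int k p)\<bar> \<le> norm (real_of_int (fst p), real_of_int (snd p))"
  unfolding coordk_int_def norm_Pair by simp

lemma crossings_le_reset_count:
  assumes Tt: "Tt > 0" and \<eta>: "\<eta> > 0"
    and crossings: "Suc K \<le> crossings (\<lambda>m. rwalk Tt Y m \<omega>) \<eta> k n"
  shows "K \<le> snd (reset_walk (\<lambda>j. coordk_int k (Y j \<omega>)) (\<eta> * sqrt Tt / 2) n)"
proof -
  let ?s = "\<lambda>m. rwalk Tt Y m \<omega>" and ?\<xi> = "\<lambda>j. coordk_int k (Y j \<omega>)"
  obtain \<tau> where \<tau>K: "\<tau> K \<le> n" and on: "\<And>j. j \<le> K \<Longrightarrow> onB \<eta> k (?s (\<tau> j))"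
    and step: "\<And>j. j < K \<Longrightarrow> \<tau> j < \<tau> (Suc j) \<and> coordk k (?s (\<tau> (Suc j))) \<noteq> coordk k (?s (\<tau> j))"
    using crossing_times_exist[OF crossings] by blast
  \<comment> \<open>consecutive crossing points lie on distinct grid lines, which are \<open>\<eta>\<close> apart\<close>
  have block: "\<eta> * sqrt Tt \<le> \<bar>real_of_int (\<Sum>i\<in>{Suc (\<tau> j)..\<tau> (Suc j)}. ?\<xi> i)\<bar>" if "j < K" for j
  proof -
    have "{1..\<tau> (Suc j)} = {1..\<tau> j} \<union> {Suc (\<tau> j)..\<tau> (Suc j)}" using step[OF that] by auto
    then have "(\<Sum>i\<in>{1..\<tau> (Suc j)}. ?\<xi> i) = (\<Sum>i\<in>{1..\<tau> j}. ?\<xi> i) + (\<Sum>i\<in>{Suc (\<tau> j)..\<tau> (Suc j)}. ?\<xi> i)"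
      by (simp add: sum.union_disjoint ivl_disj_int)
    then have "coordk k (?s (\<tau> (Suc j))) - coordk k (?s (\<tau> j))
                 = real_of_int (\<Sum>i\<in>{Suc (\<tau> j)..\<tau> (Suc j)}. ?\<xi> i) / sqrt Tt"
      unfolding coordk_rwalk by (simp add: diff_divide_distrib[symmetric])
    moreover have "\<eta> \<le> \<bar>coordk k (?s (\<tau> (Suc j))) - coordk k (?s (\<tau> j))\<bar>"
      using onB_coordk_diff_ge[OF \<eta> on on] step that by auto
    ultimately show ?thesis using Tt by (simp add: pos_le_divide_eq)
  qed
  have "K \<le> snd (reset_walk ?\<xi> (\<eta> * sqrt Tt / 2) (\<tau> K))"
    using Tt \<eta> step block by (intro reset_count_ge_chain) auto
  also have "\<dots> \<le> snd (reset_walk ?\<xi> (\<eta> * sqrt Tt / 2) n)" by (rule reset_count_mono[OF \<tau>K])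
  finally show ?thesis .
qed

section \<open>An exponential bound for the number of restarts\<close>

definition reset_potential :: "real \<Rightarrow> real \<Rightarrow> int \<times> nat \<Rightarrow> real" where
  "reset_potential \<theta> R p = cosh (\<theta> * real_of_int (fst p)) * cosh (\<theta> * R) ^ snd p"

lemma cosh_le_cosh_abs: "\<bar>x\<bar> \<le> \<bar>y\<bar> \<Longrightarrow> cosh (x::real) \<le> cosh y"
  using cosh_real_nonneg_le_iff[of "\<bar>x\<bar>" "\<bar>y\<bar>"] by simp

lemma exp_mult_le_exp_abs: "\<bar>x\<bar> \<le> D \<Longrightarrow> exp (s * x) \<le> exp (\<bar>s\<bar> * (D::real))"
proof -
  assume "\<bar>x\<bar> \<le> D"
  then have "\<bar>s\<bar> * \<bar>x\<bar> \<le> \<bar>s\<bar> * D" by (simp add: mult_left_mono)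
  moreover have "s * x \<le> \<bar>s\<bar> * \<bar>x\<bar>" by (simp flip: abs_mult)
  ultimately show ?thesis by simp
qed

lemma abs_reset_potential_le:
  assumes "\<bar>real_of_int (fst p)\<bar> < R" "snd p \<le> t"
  shows "\<bar>reset_potential \<theta> R p\<bar> \<le> cosh (\<theta> * R) ^ Suc t"
proof -
  have a: "1 \<le> cosh (\<theta> * R)" by (rule cosh_real_ge_1)
  have "cosh (\<theta> * real_of_int (fst p)) \<le> cosh (\<theta> * R)"
    using assms(1) by (intro cosh_le_cosh_abs) (simp add: abs_mult mult_left_mono)
  moreover have "cosh (\<theta> * R) ^ snd p \<le> cosh (\<theta> * R) ^ t"
    using assms(2) a by (rule power_increasing)
  ultimately show ?thesis
    using a by (simp add: reset_potential_def abs_mult mult_mono)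
qed

(* A restart only happens when |x + z| >= R, and then cosh (theta (x + z)) >= cosh (theta R) pays
   for the extra factor of the potential. *)
lemma reset_potential_Suc_le:
  assumes "R > 0"
  shows "reset_potential \<theta> R (reset_walk \<xi> R (Suc t))
    \<le> cosh (\<theta> * (real_of_int (fst (reset_walk \<xi> R t)) + real_of_int (\<xi> (Suc t))))
        * cosh (\<theta> * R) ^ snd (reset_walk \<xi> R t)"
proof (cases "R \<le> \<bar>real_of_int (fst (reset_walk \<xi> R t) + \<xi> (Suc t))\<bar>")
  case True
  then have "cosh (\<theta> * R) \<le> cosh (\<theta> * (real_of_int (fst (reset_walk \<xi> R t)) + real_of_int (\<xi> (Suc t))))"
    using assms by (intro cosh_le_cosh_abs) (simp add: abs_mult mult_left_mono)
  with True show ?thesis by (simp add: reset_potential_def mult_right_mono)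
qed (simp add: reset_potential_def)

lemma cosh_mult_add_eq:
  "cosh (\<theta> * (x + z)) * a = exp (\<theta> * x) / 2 * a * exp (\<theta> * z) + exp (- \<theta> * x) / 2 * a * exp (- \<theta> * z)"
  for \<theta> x z a :: real
  by (simp add: cosh_def exp_add[symmetric] algebra_simps)

locale iid_int_seq = prob_space M for M :: "'a measure" +
  fixes \<xi> :: "nat \<Rightarrow> 'a \<Rightarrow> int"
  assumes indep: "indep_vars (\<lambda>_. count_space UNIV) \<xi> {1..}"
    and ident: "\<And>j. 1 \<le> j \<Longrightarrow> distr M (count_space UNIV) (\<xi> j) = distr M (count_space UNIV) (\<xi> 1)"
begin

lemma measurable_seq: "1 \<le> j \<Longrightarrow> \<xi> j \<in> measurable M (count_space UNIV)"
  using indep unfolding indep_vars_def by simp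

lemma borel_measurable_seq:
  fixes f :: "int \<Rightarrow> real"
  shows "1 \<le> j \<Longrightarrow> (\<lambda>\<omega>. f (\<xi> j \<omega>)) \<in> borel_measurable M"
  using measurable_compose[OF measurable_seq, of j f borel] by simp

lemma integral_seq_eq:
  fixes f :: "int \<Rightarrow> real"
  assumes "1 \<le> j"
  shows "(\<integral>\<omega>. f (\<xi> j \<omega>) \<partial>M) = (\<integral>\<omega>. f (\<xi> 1 \<omega>) \<partial>M)"
  using integral_distr[OF measurable_seq[OF assms], of f] integral_distr[OF measurable_seq[of 1], of f]
  by (simp add: ident[OF assms])

lemma integrable_seq_iff:
  fixes f :: "int \<Rightarrow> real"
  assumes "1 \<le> j"
  shows "integrable M (\<lambda>\<omega>. f (\<xi> j \<omega>)) \<longleftrightarrow> integrable M (\<lambda>\<omega>. f (\<xi> 1 \<omega>))"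
  using integrable_distr_eq[OF measurable_seq[OF assms], of f] integrable_distr_eq[OF measurable_seq[of 1], of f]
  by (simp add: ident[OF assms])

lemma iid_int_seq_compose: "iid_int_seq M (\<lambda>j \<omega>. g (\<xi> j \<omega>))"
proof unfold_locales
  show "indep_vars (\<lambda>_. count_space UNIV) (\<lambda>j \<omega>. g (\<xi> j \<omega>)) {1..}"
    by (rule indep_vars_compose2[OF indep]) simp
  have distr_g: "distr M (count_space UNIV) (\<lambda>\<omega>. g (\<xi> j \<omega>))
          = distr (distr M (count_space UNIV) (\<xi> j)) (count_space UNIV) g" if "1 \<le> j" for j
    using distr_distr[OF _ measurable_seq[OF that], of g "count_space UNIV"] by (simp add: comp_def)
  show "distr M (count_space UNIV) (\<lambda>\<omega>. g (\<xi> j \<omega>)) = distr M (count_space UNIV) (\<lambda>\<omega>. g (\<xi> 1 \<omega>))"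
    if "1 \<le> j" for j
    using distr_g[OF that] distr_g[of 1] by (simp add: ident[OF that])
qed

lemma reset_walk_restrict:
  "reset_walk (\<lambda>j. \<xi> j \<omega>) R t = reset_walk (restrict (\<lambda>j. \<xi> j \<omega>) {1..t}) R t"
  by (rule reset_walk_cong) simp

lemma PiM_count_space_ivl:
  "PiM {1..t::nat} (\<lambda>_. count_space (UNIV :: int set)) = count_space (PiE {1..t} (\<lambda>_. UNIV))"
  by (rule count_space_PiM_finite) auto

lemma measurable_reset_walk: "(\<lambda>\<omega>. reset_walk (\<lambda>j. \<xi> j \<omega>) R t) \<in> measurable M (count_space UNIV)"
proof -
  have "(\<lambda>\<omega>. restrict (\<lambda>j. \<xi> j \<omega>) {1..t}) \<in> measurable M (PiM {1..t} (\<lambda>_. count_space UNIV))"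
    using measurable_seq by (intro measurable_restrict) auto
  moreover have "(\<lambda>f. reset_walk f R t) \<in> measurable (PiM {1..t} (\<lambda>_. count_space UNIV)) (count_space UNIV)"
    unfolding PiM_count_space_ivl by simp
  ultimately show ?thesis unfolding reset_walk_restrict by (rule measurable_compose)
qed

lemma indep_reset_walk_next:
  fixes U :: "int \<times> nat \<Rightarrow> real" and V :: "int \<Rightarrow> real"
  shows "indep_var borel (\<lambda>\<omega>. U (reset_walk (\<lambda>j. \<xi> j \<omega>) R t)) borel (\<lambda>\<omega>. V (\<xi> (Suc t) \<omega>))"
proof -
  have "indep_var (PiM {1..t} (\<lambda>_. count_space UNIV)) (\<lambda>\<omega>. restrict (\<lambda>j. \<xi> j \<omega>) {1..t})
                  (PiM {Suc t} (\<lambda>_. count_space UNIV)) (\<lambda>\<omega>. restrict (\<lambda>j. \<xi> j \<omega>) {Suc t})"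
    by (rule indep_var_restrict[OF indep]) auto
  moreover have "(\<lambda>f. U (reset_walk f R t)) \<in> measurable (PiM {1..t} (\<lambda>_. count_space UNIV)) borel"
    unfolding PiM_count_space_ivl by simp
  moreover have "(\<lambda>f. f (Suc t)) \<in> measurable (PiM {Suc t} (\<lambda>_. count_space UNIV)) (count_space UNIV)"
    by (rule measurable_component_singleton) simp
  then have "(\<lambda>f. V (f (Suc t))) \<in> measurable (PiM {Suc t} (\<lambda>_. count_space UNIV)) borel"
    by (rule measurable_compose) simp
  ultimately have "indep_var borel ((\<lambda>f. U (reset_walk f R t)) \<circ> (\<lambda>\<omega>. restrict (\<lambda>j. \<xi> j \<omega>) {1..t}))
                             borel ((\<lambda>f. V (f (Suc t))) \<circ> (\<lambda>\<omega>. restrict (\<lambda>j. \<xi> j \<omega>) {Suc t}))"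
    by (rule indep_var_compose)
  then show ?thesis unfolding reset_walk_restrict comp_def by simp
qed

lemma integrable_reset_walk_fun:
  fixes U :: "int \<times> nat \<Rightarrow> real"
  assumes "R > 0" and "\<And>p. \<bar>real_of_int (fst p)\<bar> < R \<Longrightarrow> snd p \<le> t \<Longrightarrow> \<bar>U p\<bar> \<le> C"
  shows "integrable M (\<lambda>\<omega>. U (reset_walk (\<lambda>j. \<xi> j \<omega>) R t))"
proof (rule integrable_const_bound[where B = C])
  show "AE \<omega> in M. norm (U (reset_walk (\<lambda>j. \<xi> j \<omega>) R t)) \<le> C"
    using assms(2) abs_reset_pos_less[OF assms(1)] reset_count_le by (intro AE_I2) simp
  show "(\<lambda>\<omega>. U (reset_walk (\<lambda>j. \<xi> j \<omega>) R t)) \<in> borel_measurable M"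
    using measurable_compose[OF measurable_reset_walk, of U borel] by simp
qed

lemma integrable_reset_potential:
  "R > 0 \<Longrightarrow> integrable M (\<lambda>\<omega>. reset_potential \<theta> R (reset_walk (\<lambda>j. \<xi> j \<omega>) R t))"
  by (rule integrable_reset_walk_fun) (auto intro: abs_reset_potential_le)

lemma integral_mult_exp_next_le:
  fixes U :: "int \<times> nat \<Rightarrow> real"
  assumes R: "R > 0" and bounded: "\<And>j \<omega>. \<bar>real_of_int (\<xi> j \<omega>)\<bar> \<le> B"
    and U_nonneg: "\<And>p. 0 \<le> U p" and U_le: "\<And>p. \<bar>real_of_int (fst p)\<bar> < R \<Longrightarrow> snd p \<le> t \<Longrightarrow> U p \<le> C"
    and mgf: "(\<integral>\<omega>. exp (s * real_of_int (\<xi> 1 \<omega>)) \<partial>M) \<le> \<mu>"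
  shows "integrable M (\<lambda>\<omega>. U (reset_walk (\<lambda>j. \<xi> j \<omega>) R t) * exp (s * real_of_int (\<xi> (Suc t) \<omega>)))"
    and "(\<integral>\<omega>. U (reset_walk (\<lambda>j. \<xi> j \<omega>) R t) * exp (s * real_of_int (\<xi> (Suc t) \<omega>)) \<partial>M)
           \<le> \<mu> * (\<integral>\<omega>. U (reset_walk (\<lambda>j. \<xi> j \<omega>) R t) \<partial>M)"
proof -
  let ?U = "\<lambda>\<omega>. U (reset_walk (\<lambda>j. \<xi> j \<omega>) R t)" and ?V = "\<lambda>\<omega>. exp (s * real_of_int (\<xi> (Suc t) \<omega>))"
  have U_int: "integrable M ?U"
    using U_nonneg U_le by (intro integrable_reset_walk_fun[OF R]) auto
  have V_int: "integrable M ?V"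
    using exp_mult_le_exp_abs[OF bounded] borel_measurable_seq[of "Suc t"]
    by (intro integrable_const_bound[where B = "exp (\<bar>s\<bar> * B)"]) auto
  have indep_UV: "indep_var borel ?U borel ?V" by (rule indep_reset_walk_next)
  show "integrable M (\<lambda>\<omega>. ?U \<omega> * ?V \<omega>)" by (rule indep_var_integrable[OF indep_UV U_int V_int])
  have "(\<integral>\<omega>. ?V \<omega> \<partial>M) = (\<integral>\<omega>. exp (s * real_of_int (\<xi> 1 \<omega>)) \<partial>M)"
    by (rule integral_seq_eq) simp
  then have "(\<integral>\<omega>. ?V \<omega> \<partial>M) \<le> \<mu>" using mgf by simp
  then have "(\<integral>\<omega>. ?U \<omega> \<partial>M) * (\<integral>\<omega>. ?V \<omega> \<partial>M) \<le> (\<integral>\<omega>. ?U \<omega> \<partial>M) * \<mu>"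
    using U_nonneg by (intro mult_left_mono Bochner_Integration.integral_nonneg) auto
  then show "(\<integral>\<omega>. ?U \<omega> * ?V \<omega> \<partial>M) \<le> \<mu> * (\<integral>\<omega>. ?U \<omega> \<partial>M)"
    using indep_var_lebesgue_integral[OF indep_UV U_int V_int] by (simp add: mult.commute)
qed

lemma integral_reset_potential_Suc_le:
  assumes R: "R > 0" and bounded: "\<And>j \<omega>. \<bar>real_of_int (\<xi> j \<omega>)\<bar> \<le> B"
    and mgf: "\<And>s. \<bar>s\<bar> = \<bar>\<theta>\<bar> \<Longrightarrow> (\<integral>\<omega>. exp (s * real_of_int (\<xi> 1 \<omega>)) \<partial>M) \<le> \<mu>"
  shows "(\<integral>\<omega>. reset_potential \<theta> R (reset_walk (\<lambda>j. \<xi> j \<omega>) R (Suc t)) \<partial>M)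
           \<le> \<mu> * (\<integral>\<omega>. reset_potential \<theta> R (reset_walk (\<lambda>j. \<xi> j \<omega>) R t) \<partial>M)"
proof -
  let ?w = "\<lambda>\<omega>. reset_walk (\<lambda>j. \<xi> j \<omega>) R t" and ?z = "\<lambda>\<omega>. real_of_int (\<xi> (Suc t) \<omega>)"
  define U where "U s p = exp (s * real_of_int (fst p)) / 2 * cosh (\<theta> * R) ^ snd p" for s p
  have U_le: "U s p \<le> exp (\<bar>s\<bar> * R) * cosh (\<theta> * R) ^ t"
    if "\<bar>real_of_int (fst p)\<bar> < R" "snd p \<le> t" for s p
  proof -
    have "exp (s * real_of_int (fst p)) / 2 \<le> exp (\<bar>s\<bar> * R)"
      using exp_mult_le_exp_abs[of "real_of_int (fst p)" R s] that(1) exp_gt_zero[of "s * real_of_int (fst p)"]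
      by linarith
    moreover have "cosh (\<theta> * R) ^ snd p \<le> cosh (\<theta> * R) ^ t"
      using that(2) cosh_real_ge_1 by (rule power_increasing)
    ultimately show ?thesis unfolding U_def by (intro mult_mono) auto
  qed
  have U_nonneg: "0 \<le> U s p" for s p unfolding U_def by simp
  have U_int: "integrable M (\<lambda>\<omega>. U s (?w \<omega>))" for s
    by (rule integrable_reset_walk_fun[OF R, where C = "exp (\<bar>s\<bar> * R) * cosh (\<theta> * R) ^ t"])
      (use U_nonneg U_le in auto)
  have UV: "integrable M (\<lambda>\<omega>. U s (?w \<omega>) * exp (s * ?z \<omega>))"
      "(\<integral>\<omega>. U s (?w \<omega>) * exp (s * ?z \<omega>) \<partial>M) \<le> \<mu> * (\<integral>\<omega>. U s (?w \<omega>) \<partial>M)"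
    if "\<bar>s\<bar> = \<bar>\<theta>\<bar>" for s
    using integral_mult_exp_next_le[where U = "U s", OF R bounded U_nonneg U_le mgf[OF that]] by auto
  have U_split: "cosh (\<theta> * (real_of_int (fst p) + z)) * cosh (\<theta> * R) ^ snd p
      = U \<theta> p * exp (\<theta> * z) + U (- \<theta>) p * exp (- \<theta> * z)" for p z
    unfolding U_def cosh_mult_add_eq ..
  have step: "reset_potential \<theta> R (reset_walk (\<lambda>j. \<xi> j \<omega>) R (Suc t))
                \<le> U \<theta> (?w \<omega>) * exp (\<theta> * ?z \<omega>) + U (- \<theta>) (?w \<omega>) * exp (- \<theta> * ?z \<omega>)" for \<omega>
    using reset_potential_Suc_le[OF R, of \<theta> "\<lambda>j. \<xi> j \<omega>" t] unfolding U_split .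
  have split: "reset_potential \<theta> R p = U \<theta> p + U (- \<theta>) p" for p
    by (simp add: reset_potential_def U_def cosh_def algebra_simps add_divide_distrib)
  have "(\<integral>\<omega>. reset_potential \<theta> R (reset_walk (\<lambda>j. \<xi> j \<omega>) R (Suc t)) \<partial>M)
          \<le> (\<integral>\<omega>. U \<theta> (?w \<omega>) * exp (\<theta> * ?z \<omega>) + U (- \<theta>) (?w \<omega>) * exp (- \<theta> * ?z \<omega>) \<partial>M)"
    using UV(1)[of \<theta>] UV(1)[of "- \<theta>"]
    by (intro integral_mono integrable_reset_potential[OF R] Bochner_Integration.integrable_add step) auto
  also have "\<dots> = (\<integral>\<omega>. U \<theta> (?w \<omega>) * exp (\<theta> * ?z \<omega>) \<partial>M) + (\<integral>\<omega>. U (- \<theta>) (?w \<omega>) * exp (- \<theta> * ?z \<omega>) \<partial>M)"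
    using UV(1)[of \<theta>] UV(1)[of "- \<theta>"] by (intro Bochner_Integration.integral_add) auto
  also have "\<dots> \<le> \<mu> * (\<integral>\<omega>. U \<theta> (?w \<omega>) \<partial>M) + \<mu> * (\<integral>\<omega>. U (- \<theta>) (?w \<omega>) \<partial>M)"
    using UV(2)[of \<theta>] UV(2)[of "- \<theta>"] by (intro add_mono) auto
  also have "\<dots> = \<mu> * (\<integral>\<omega>. reset_potential \<theta> R (?w \<omega>) \<partial>M)"
    unfolding split using U_int by (simp add: distrib_left)
  finally show ?thesis .
qed

lemma integral_reset_potential_le:
  assumes R: "R > 0" and bounded: "\<And>j \<omega>. \<bar>real_of_int (\<xi> j \<omega>)\<bar> \<le> B"
    and mgf: "\<And>s. \<bar>s\<bar> = \<bar>\<theta>\<bar> \<Longrightarrow> (\<integral>\<omega>. exp (s * real_of_int (\<xi> 1 \<omega>)) \<partial>M) \<le> \<mu>"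
  shows "(\<integral>\<omega>. reset_potential \<theta> R (reset_walk (\<lambda>j. \<xi> j \<omega>) R t) \<partial>M) \<le> \<mu> ^ t"
proof -
  have "0 \<le> (\<integral>\<omega>. exp (\<theta> * real_of_int (\<xi> 1 \<omega>)) \<partial>M)"
    by (rule Bochner_Integration.integral_nonneg) simp
  then have \<mu>: "0 \<le> \<mu>" using mgf[of \<theta>] by linarith
  show ?thesis
  proof (induction t)
    case 0
    then show ?case by (simp add: reset_potential_def)
  next
    case (Suc t)
    have "(\<integral>\<omega>. reset_potential \<theta> R (reset_walk (\<lambda>j. \<xi> j \<omega>) R (Suc t)) \<partial>M)
            \<le> \<mu> * (\<integral>\<omega>. reset_potential \<theta> R (reset_walk (\<lambda>j. \<xi> j \<omega>) R t) \<partial>M)"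
      by (rule integral_reset_potential_Suc_le[OF R bounded mgf])
    also have "\<dots> \<le> \<mu> * \<mu> ^ t" using Suc.IH \<mu> by (rule mult_left_mono)
    finally show ?case by simp
  qed
qed

theorem prob_reset_count_ge:
  assumes R: "R > 0" and bounded: "\<And>j \<omega>. \<bar>real_of_int (\<xi> j \<omega>)\<bar> \<le> B"
    and mgf: "\<And>s. \<bar>s\<bar> = \<bar>\<theta>\<bar> \<Longrightarrow> (\<integral>\<omega>. exp (s * real_of_int (\<xi> 1 \<omega>)) \<partial>M) \<le> \<mu>"
  shows "measure M {\<omega> \<in> space M. K \<le> snd (reset_walk (\<lambda>j. \<xi> j \<omega>) R n)} \<le> \<mu> ^ n / cosh (\<theta> * R) ^ K"
proof -
  let ?\<Phi> = "\<lambda>\<omega>. reset_potential \<theta> R (reset_walk (\<lambda>j. \<xi> j \<omega>) R n)"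
  have a: "1 \<le> cosh (\<theta> * R)" by (rule cosh_real_ge_1)
  have "cosh (\<theta> * R) ^ K \<le> ?\<Phi> \<omega>" if "K \<le> snd (reset_walk (\<lambda>j. \<xi> j \<omega>) R n)" for \<omega>
  proof -
    have "cosh (\<theta> * R) ^ K \<le> cosh (\<theta> * R) ^ snd (reset_walk (\<lambda>j. \<xi> j \<omega>) R n)"
      using that a by (rule power_increasing)
    also have "\<dots> \<le> ?\<Phi> \<omega>"
      unfolding reset_potential_def
      using mult_right_mono[OF cosh_real_ge_1, of "cosh (\<theta> * R) ^ snd (reset_walk (\<lambda>j. \<xi> j \<omega>) R n)"]
      by simp
    finally show ?thesis .
  qed
  then have "measure M {\<omega> \<in> space M. K \<le> snd (reset_walk (\<lambda>j. \<xi> j \<omega>) R n)}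
               \<le> measure M {\<omega> \<in> space M. cosh (\<theta> * R) ^ K \<le> ?\<Phi> \<omega>}"
    using integrable_reset_potential[OF R] by (intro finite_measure_mono) auto
  also have "\<dots> \<le> (\<integral>\<omega>. ?\<Phi> \<omega> \<partial>M) / cosh (\<theta> * R) ^ K"
    using a by (intro integral_Markov_inequality_measure[OF integrable_reset_potential[OF R], where A = "space M"])
      (auto simp: reset_potential_def)
  also have "\<dots> \<le> \<mu> ^ n / cosh (\<theta> * R) ^ K"
    using integral_reset_potential_le[OF assms] a by (intro divide_right_mono) auto
  finally show ?thesis .
qed

end

section \<open>Truncated increments and large jumps\<close>

lemma exp_le_quadratic:
  fixes y :: real
  assumes "\<bar>y\<bar> \<le> 1"
  shows "exp y \<le> 1 + y + y\<^sup>2"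
proof (cases "0 \<le> y")
  case True
  then show ?thesis using assms by (intro exp_bound) auto
next
  case False
  define u where "u = - y"
  have u: "0 < u" "u \<le> 1" using False assms unfolding u_def by auto
  have pos: "0 < 1 - u + u\<^sup>2" using u by (simp add: power2_eq_square) (smt (verit) mult_pos_pos)
  have "1 \<le> (1 + u) * (1 - u + u\<^sup>2)" using u by (simp add: power2_eq_square algebra_simps)
  also have "\<dots> \<le> exp u * (1 - u + u\<^sup>2)"
    using exp_ge_add_one_self[of u] pos by (intro mult_right_mono) auto
  finally have "1 / exp u \<le> 1 - u + u\<^sup>2" by (simp add: divide_le_eq mult.commute)
  then show ?thesis unfolding u_def by (simp add: exp_minus inverse_eq_divide)
qed

lemma (in prob_space) abs_integral_truncation_le:
  fixes Z :: "'a \<Rightarrow> real"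
  assumes [measurable]: "Z \<in> borel_measurable M"
    and int1: "integrable M Z" and int3: "integrable M (\<lambda>\<omega>. \<bar>Z \<omega>\<bar> ^ 3)"
    and mean: "(\<integral>\<omega>. Z \<omega> \<partial>M) = 0" and b: "b > 0"
  shows "\<bar>\<integral>\<omega>. (if \<bar>Z \<omega>\<bar> \<le> b then Z \<omega> else 0) \<partial>M\<bar> \<le> (\<integral>\<omega>. \<bar>Z \<omega>\<bar> ^ 3 \<partial>M) / b\<^sup>2"
proof -
  define \<zeta> where "\<zeta> \<omega> = (if \<bar>Z \<omega>\<bar> \<le> b then Z \<omega> else 0)" for \<omega>
  have \<zeta>_int: "integrable M \<zeta>"
    unfolding \<zeta>_def using b by (intro integrable_const_bound[where B = b]) auto
  have "\<bar>\<zeta> \<omega> - Z \<omega>\<bar> \<le> \<bar>Z \<omega>\<bar> ^ 3 / b\<^sup>2" for \<omega>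
  proof (cases "\<bar>Z \<omega>\<bar> \<le> b")
    case False
    then have "b\<^sup>2 * \<bar>Z \<omega>\<bar> \<le> \<bar>Z \<omega>\<bar>\<^sup>2 * \<bar>Z \<omega>\<bar>"
      using b by (intro mult_right_mono power_mono) auto
    then show ?thesis
      using b False by (simp add: \<zeta>_def pos_le_divide_eq power2_eq_square power3_eq_cube mult_ac)
  qed (use b in \<open>simp add: \<zeta>_def\<close>)
  then have bound: "(\<integral>\<omega>. \<bar>\<zeta> \<omega> - Z \<omega>\<bar> \<partial>M) \<le> (\<integral>\<omega>. \<bar>Z \<omega>\<bar> ^ 3 / b\<^sup>2 \<partial>M)"
    using \<zeta>_int int1 int3 by (intro integral_mono) auto
  have "\<bar>\<integral>\<omega>. \<zeta> \<omega> \<partial>M\<bar> = \<bar>\<integral>\<omega>. \<zeta> \<omega> - Z \<omega> \<partial>M\<bar>"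
    using \<zeta>_int int1 mean by simp
  also have "\<dots> \<le> (\<integral>\<omega>. \<bar>\<zeta> \<omega> - Z \<omega>\<bar> \<partial>M)"
    using integral_abs_bound[of M "\<lambda>\<omega>. \<zeta> \<omega> - Z \<omega>"] by simp
  also have "\<dots> \<le> (\<integral>\<omega>. \<bar>Z \<omega>\<bar> ^ 3 \<partial>M) / b\<^sup>2"
    using bound by simp
  finally show ?thesis unfolding \<zeta>_def .
qed

lemma (in prob_space) integral_exp_truncation_le:
  fixes Z :: "'a \<Rightarrow> real"
  assumes [measurable]: "Z \<in> borel_measurable M"
    and int1: "integrable M Z" and int2: "integrable M (\<lambda>\<omega>. (Z \<omega>)\<^sup>2)"
    and int3: "integrable M (\<lambda>\<omega>. \<bar>Z \<omega>\<bar> ^ 3)"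
    and mean: "(\<integral>\<omega>. Z \<omega> \<partial>M) = 0" and var: "(\<integral>\<omega>. (Z \<omega>)\<^sup>2 \<partial>M) = 1"
    and b: "b > 0" and sb: "\<bar>s\<bar> * b \<le> 1"
  shows "(\<integral>\<omega>. exp (s * (if \<bar>Z \<omega>\<bar> \<le> b then Z \<omega> else 0)) \<partial>M)
           \<le> exp (\<bar>s\<bar> * (\<integral>\<omega>. \<bar>Z \<omega>\<bar> ^ 3 \<partial>M) / b\<^sup>2 + s\<^sup>2)"
proof -
  define \<zeta> where "\<zeta> \<omega> = (if \<bar>Z \<omega>\<bar> \<le> b then Z \<omega> else 0)" for \<omega>
  have [measurable]: "\<zeta> \<in> borel_measurable M" unfolding \<zeta>_def by measurable
  have \<zeta>_le: "\<bar>\<zeta> \<omega>\<bar> \<le> b" for \<omega> unfolding \<zeta>_def using b by auto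
  have s\<zeta>: "\<bar>s * \<zeta> \<omega>\<bar> \<le> 1" for \<omega>
    using mult_left_mono[OF \<zeta>_le[of \<omega>], of "\<bar>s\<bar>"] sb by (simp add: abs_mult)
  have \<zeta>_int: "integrable M \<zeta>"
    using \<zeta>_le by (intro integrable_const_bound[where B = b]) auto
  have "(\<zeta> \<omega>)\<^sup>2 \<le> b\<^sup>2" for \<omega>
    using power_mono[OF \<zeta>_le[of \<omega>] abs_ge_zero, of 2] by simp
  then have \<zeta>2_int: "integrable M (\<lambda>\<omega>. (\<zeta> \<omega>)\<^sup>2)"
    by (intro integrable_const_bound[where B = "b\<^sup>2"]) auto
  have "exp (s * \<zeta> \<omega>) \<le> exp 1" for \<omega> using s\<zeta>[of \<omega>] by simp
  then have exp_int: "integrable M (\<lambda>\<omega>. exp (s * \<zeta> \<omega>))"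
    by (intro integrable_const_bound[where B = "exp 1"]) auto
  have "(\<integral>\<omega>. exp (s * \<zeta> \<omega>) \<partial>M) \<le> (\<integral>\<omega>. 1 + s * \<zeta> \<omega> + s\<^sup>2 * (\<zeta> \<omega>)\<^sup>2 \<partial>M)"
    using exp_le_quadratic[OF s\<zeta>]
    by (intro integral_mono exp_int Bochner_Integration.integrable_add integrable_mult_right \<zeta>_int \<zeta>2_int)
      (auto simp: power_mult_distrib)
  also have "\<dots> = 1 + s * (\<integral>\<omega>. \<zeta> \<omega> \<partial>M) + s\<^sup>2 * (\<integral>\<omega>. (\<zeta> \<omega>)\<^sup>2 \<partial>M)"
    using \<zeta>_int \<zeta>2_int by (simp add: prob_space)
  also have "\<dots> \<le> 1 + \<bar>s\<bar> * ((\<integral>\<omega>. \<bar>Z \<omega>\<bar> ^ 3 \<partial>M) / b\<^sup>2) + s\<^sup>2"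
  proof -
    have "s * (\<integral>\<omega>. \<zeta> \<omega> \<partial>M) \<le> \<bar>s\<bar> * \<bar>\<integral>\<omega>. \<zeta> \<omega> \<partial>M\<bar>" by (simp flip: abs_mult)
    also have "\<dots> \<le> \<bar>s\<bar> * ((\<integral>\<omega>. \<bar>Z \<omega>\<bar> ^ 3 \<partial>M) / b\<^sup>2)"
      unfolding \<zeta>_def by (intro mult_left_mono abs_integral_truncation_le) (use assms in auto)
    finally have "s * (\<integral>\<omega>. \<zeta> \<omega> \<partial>M) \<le> \<bar>s\<bar> * ((\<integral>\<omega>. \<bar>Z \<omega>\<bar> ^ 3 \<partial>M) / b\<^sup>2)" .
    moreover have "(\<integral>\<omega>. (\<zeta> \<omega>)\<^sup>2 \<partial>M) \<le> 1"
      unfolding var[symmetric] using \<zeta>2_int int2 by (intro integral_mono) (auto simp: \<zeta>_def)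
    ultimately show ?thesis by (smt (verit) mult_left_le zero_le_power2)
  qed
  also have "\<dots> \<le> exp (\<bar>s\<bar> * (\<integral>\<omega>. \<bar>Z \<omega>\<bar> ^ 3 \<partial>M) / b\<^sup>2 + s\<^sup>2)"
    using exp_ge_add_one_self[of "\<bar>s\<bar> * (\<integral>\<omega>. \<bar>Z \<omega>\<bar> ^ 3 \<partial>M) / b\<^sup>2 + s\<^sup>2"] by (simp add: add.assoc)
  finally show ?thesis unfolding \<zeta>_def .
qed

lemma eventually_powr_le_superpolynomial:
  fixes H :: "real \<Rightarrow> real"
  assumes mono: "mono_on {0..} H" and pos: "\<And>x. 0 \<le> x \<Longrightarrow> 0 < H x"
    and growth: "filterlim (\<lambda>n::nat. ln (H (real n)) / ln (real n)) at_top sequentially"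
  shows "\<forall>\<^sub>F x in at_top. x powr L \<le> H x"
proof -
  define L' where "L' = max L 0"
  obtain N where N: "\<And>n. N \<le> n \<Longrightarrow> 2 * L' \<le> ln (H (real n)) / ln (real n)"
    using growth unfolding filterlim_at_top eventually_sequentially by blast
  have "x powr L \<le> H x" if x: "real (max N 4) \<le> x" for x
  proof -
    define m where "m = nat \<lfloor>x\<rfloor>"
    have x4: "4 \<le> x" using x by simp
    have "int (max N 4) \<le> \<lfloor>x\<rfloor>" using x by (simp add: le_floor_iff)
    then have mN: "max N 4 \<le> m" unfolding m_def by linarith
    have mx: "real m \<le> x" "x - 1 \<le> real m" unfolding m_def using x4 by linarith+
    have m4: "4 \<le> real m" using mN by simp
    have "2 * L' * ln (real m) \<le> ln (H (real m))"
      using N[of m] mN m4 by (simp add: le_divide_eq)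
    then have "exp (2 * L' * ln (real m)) \<le> H (real m)"
      using pos[of "real m"] by (metis exp_le_cancel_iff exp_ln of_nat_0_le_iff)
    moreover have "exp (2 * L' * ln (real m)) = (real m ^ 2) powr L'"
      using m4 by (simp add: powr_def ln_mult power2_eq_square algebra_simps)
    moreover have "x \<le> real m ^ 2"
    proof -
      have "(x - 1) ^ 2 = x * (x - 3) + 1 + x" by (simp add: power2_eq_square algebra_simps)
      then have "x \<le> (x - 1) ^ 2" using x4 by simp
      also have "\<dots> \<le> real m ^ 2" using mx x4 by (intro power_mono) auto
      finally show ?thesis .
    qed
    then have "x powr L \<le> (real m ^ 2) powr L'"
    proof -
      have "x powr L \<le> x powr L'" unfolding L'_def using x4 by (intro powr_mono) auto
      also have "\<dots> \<le> (real m ^ 2) powr L'"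
        using \<open>x \<le> real m ^ 2\<close> x4 unfolding L'_def by (intro powr_mono2) auto
      finally show ?thesis .
    qed
    ultimately have "x powr L \<le> H (real m)" by linarith
    also have "\<dots> \<le> H x" using mx x4 by (intro mono_onD[OF mono]) auto
    finally show ?thesis .
  qed
  then show ?thesis by (rule eventually_at_top_linorderI)
qed

lemma (in prob_space) integrable_abs_cube:
  fixes Z :: "'a \<Rightarrow> real" and H :: "real \<Rightarrow> real"
  assumes [measurable]: "Z \<in> borel_measurable M"
    and mono: "mono_on {0..} H" and pos: "\<And>x. 0 \<le> x \<Longrightarrow> 0 < H x"
    and cube: "\<forall>\<^sub>F x in at_top. x powr 3 \<le> H x" and H_int: "integrable M (\<lambda>\<omega>. H \<bar>Z \<omega>\<bar>)"
  shows "integrable M (\<lambda>\<omega>. \<bar>Z \<omega>\<bar> ^ 3)"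
proof -
  obtain x0 where x0: "\<And>x. x0 \<le> x \<Longrightarrow> x powr 3 \<le> H x"
    using cube unfolding eventually_at_top_linorder by blast
  define x3 where "x3 = max x0 1"
  have bound: "\<bar>Z \<omega>\<bar> ^ 3 \<le> x3 ^ 3 + H \<bar>Z \<omega>\<bar>" for \<omega>
  proof (cases "x3 \<le> \<bar>Z \<omega>\<bar>")
    case True
    then have "x0 \<le> \<bar>Z \<omega>\<bar>" "0 < \<bar>Z \<omega>\<bar>" unfolding x3_def by auto
    then have "\<bar>Z \<omega>\<bar> ^ 3 \<le> H \<bar>Z \<omega>\<bar>" using x0[of "\<bar>Z \<omega>\<bar>"] by (simp add: powr_realpow)
    moreover have "0 \<le> x3 ^ 3" unfolding x3_def by simp
    ultimately show ?thesis by linarith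
  next
    case False
    then have "\<bar>Z \<omega>\<bar> ^ 3 \<le> x3 ^ 3" by (intro power_mono) auto
    moreover have "0 < H \<bar>Z \<omega>\<bar>" by (rule pos) simp
    ultimately show ?thesis by linarith
  qed
  show ?thesis
  proof (rule Bochner_Integration.integrable_bound)
    show "integrable M (\<lambda>\<omega>. x3 ^ 3 + H \<bar>Z \<omega>\<bar>)" using H_int by simp
    show "(\<lambda>\<omega>. \<bar>Z \<omega>\<bar> ^ 3) \<in> borel_measurable M" by measurable
    show "AE \<omega> in M. norm (\<bar>Z \<omega>\<bar> ^ 3) \<le> norm (x3 ^ 3 + H \<bar>Z \<omega>\<bar>)"
      using bound by (intro AE_I2) (auto intro: order_trans abs_ge_self)
  qed
qed

definition truncate_int :: "real \<Rightarrow> int \<Rightarrow> int" where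
  "truncate_int b v = (if \<bar>real_of_int v\<bar> \<le> b then v else 0)"

context iid_int_seq
begin

lemma sets_seq_Collect: "1 \<le> j \<Longrightarrow> {\<omega> \<in> space M. P (\<xi> j \<omega>)} \<in> sets M"
proof -
  assume j: "1 \<le> j"
  have "{\<omega> \<in> space M. P (\<xi> j \<omega>)} = \<xi> j -` {v. P v} \<inter> space M" by auto
  then show ?thesis using measurable_sets[OF measurable_seq[OF j], of "{v. P v}"] by simp
qed

lemma sets_reset_walk_Collect: "{\<omega> \<in> space M. P (reset_walk (\<lambda>j. \<xi> j \<omega>) R t)} \<in> sets M"
proof -
  have "{\<omega> \<in> space M. P (reset_walk (\<lambda>j. \<xi> j \<omega>) R t)}
          = (\<lambda>\<omega>. reset_walk (\<lambda>j. \<xi> j \<omega>) R t) -` {p. P p} \<inter> space M" by auto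
  then show ?thesis using measurable_sets[OF measurable_reset_walk, of "{p. P p}"] by simp
qed

lemma prob_exists_big_jump_le:
  fixes H :: "real \<Rightarrow> real"
  assumes mono: "mono_on {0..} H" and pos: "\<And>x. 0 \<le> x \<Longrightarrow> 0 < H x"
    and H_int: "integrable M (\<lambda>\<omega>. H \<bar>real_of_int (\<xi> 1 \<omega>)\<bar>)" and b: "0 \<le> b"
  shows "measure M {\<omega> \<in> space M. \<exists>j\<in>{1..n}. b < \<bar>real_of_int (\<xi> j \<omega>)\<bar>}
           \<le> real n * (\<integral>\<omega>. H \<bar>real_of_int (\<xi> 1 \<omega>)\<bar> \<partial>M) / H b"
proof -
  let ?E = "\<lambda>j. {\<omega> \<in> space M. b < \<bar>real_of_int (\<xi> j \<omega>)\<bar>}"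
  have each: "measure M (?E j) \<le> (\<integral>\<omega>. H \<bar>real_of_int (\<xi> 1 \<omega>)\<bar> \<partial>M) / H b" if "j \<in> {1..n}" for j
  proof -
    have j: "1 \<le> j" using that by simp
    have "?E j \<subseteq> {\<omega> \<in> space M. H b \<le> H \<bar>real_of_int (\<xi> j \<omega>)\<bar>}"
      using b by (auto intro!: mono_onD[OF mono])
    then have "measure M (?E j) \<le> measure M {\<omega> \<in> space M. H b \<le> H \<bar>real_of_int (\<xi> j \<omega>)\<bar>}"
      by (intro finite_measure_mono sets_seq_Collect j)
    also have "\<dots> \<le> (\<integral>\<omega>. H \<bar>real_of_int (\<xi> j \<omega>)\<bar> \<partial>M) / H b"
      using H_int integrable_seq_iff[OF j, of "\<lambda>v. H \<bar>real_of_int v\<bar>"] pos b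
      by (intro integral_Markov_inequality_measure[where A = "space M"]) (auto simp: less_imp_le)
    also have "\<dots> = (\<integral>\<omega>. H \<bar>real_of_int (\<xi> 1 \<omega>)\<bar> \<partial>M) / H b"
      using integral_seq_eq[OF j, of "\<lambda>v. H \<bar>real_of_int v\<bar>"] by simp
    finally show ?thesis .
  qed
  have "measure M {\<omega> \<in> space M. \<exists>j\<in>{1..n}. b < \<bar>real_of_int (\<xi> j \<omega>)\<bar>} = measure M (\<Union>j\<in>{1..n}. ?E j)"
    by (rule arg_cong[where f = "measure M"]) auto
  also have "\<dots> \<le> (\<Sum>j\<in>{1..n}. measure M (?E j))"
    by (rule finite_measure_subadditive_finite) (auto intro: sets_seq_Collect)
  also have "\<dots> \<le> (\<Sum>j\<in>{1..n}. (\<integral>\<omega>. H \<bar>real_of_int (\<xi> 1 \<omega>)\<bar> \<partial>M) / H b)"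
    by (rule sum_mono) (rule each)
  finally show ?thesis by simp
qed

end

section \<open>Choice of the parameters\<close>

lemma exp_minus_one_le_cosh: "exp (y - 1) \<le> cosh (y::real)"
proof -
  have "2 \<le> exp (1::real)" using exp_ge_add_one_self[of 1] by simp
  then have "exp y / exp 1 \<le> exp y / 2" by (intro divide_left_mono) auto
  also have "\<dots> \<le> cosh y" unfolding cosh_def by simp
  finally show ?thesis by (simp add: exp_diff)
qed

lemma exp_truncated_mgf_pow_le:
  fixes N :: nat and lam m3 :: real
  defines "T \<equiv> real N / ln (real N)"
  assumes N: "3 \<le> real N" and lam: "0 < lam" and small: "real N * (lam ^ 3 * m3) / (T * sqrt T) \<le> 1"
  shows "exp (lam / sqrt T * m3 / (sqrt T / lam)\<^sup>2 + (lam / sqrt T)\<^sup>2) ^ N \<le> exp (1 + lam\<^sup>2 * ln (real N))"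
proof -
  have lnN: "0 < ln (real N)" using N by simp
  then have T: "0 < T" unfolding T_def using N by simp
  have "(sqrt T / lam)\<^sup>2 = T / lam\<^sup>2" and \<theta>2: "(lam / sqrt T)\<^sup>2 = lam\<^sup>2 / T"
    using T by (simp_all add: power_divide)
  then have "lam / sqrt T * m3 / (sqrt T / lam)\<^sup>2 = lam ^ 3 * m3 / (T * sqrt T)"
    using T lam by (simp add: field_simps power2_eq_square power3_eq_cube)
  moreover have "real N * (lam / sqrt T)\<^sup>2 = lam\<^sup>2 * ln (real N)"
    unfolding \<theta>2 using N lnN by (simp add: T_def)
  ultimately have "real N * (lam / sqrt T * m3 / (sqrt T / lam)\<^sup>2 + (lam / sqrt T)\<^sup>2) \<le> 1 + lam\<^sup>2 * ln (real N)"
    using small by (simp add: distrib_left)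
  then show ?thesis by (simp flip: exp_of_nat_mult)
qed

lemma exp_div_cosh_pow_le:
  fixes N :: nat and Mc \<eta> :: real
  assumes N: "3 \<le> real N" and Mc: "0 < Mc" and \<eta>: "64 / Mc \<le> \<eta>"
  shows "exp (1 + (Mc / 8)\<^sup>2 * ln (real N)) / cosh (Mc / 8 * \<eta> / 2) ^ nat \<lfloor>Mc * ln (real N) / (2 * \<eta>)\<rfloor>
           \<le> exp (Mc / 8 * \<eta> / 2) * real N powr (- (Mc\<^sup>2 / 128))"
proof -
  have lnN: "0 < ln (real N)" using N by simp
  have "0 < 64 / Mc" using Mc by simp
  then have \<eta>_pos: "0 < \<eta>" using \<eta> by linarith
  define x where "x = Mc * ln (real N) / (2 * \<eta>)"
  define y where "y = Mc / 8 * \<eta> / 2"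
  have x0: "0 \<le> x" unfolding x_def using Mc lnN \<eta>_pos by simp
  have y: "1 \<le> y" using \<eta> Mc unfolding y_def by (simp add: field_simps)
  have "exp ((x - 1) * (y - 1)) \<le> exp (y - 1) ^ nat \<lfloor>x\<rfloor>"
    using x0 y by (simp flip: exp_of_nat_mult add: mult_right_mono)
  also have "\<dots> \<le> cosh y ^ nat \<lfloor>x\<rfloor>" using exp_minus_one_le_cosh by (intro power_mono) auto
  finally have "exp (1 + (Mc / 8)\<^sup>2 * ln (real N)) / cosh y ^ nat \<lfloor>x\<rfloor>
                  \<le> exp (1 + (Mc / 8)\<^sup>2 * ln (real N)) / exp ((x - 1) * (y - 1))"
    by (intro divide_left_mono) auto
  also have "\<dots> = exp (1 + (Mc / 8)\<^sup>2 * ln (real N) - (x - 1) * (y - 1))" by (simp add: exp_diff)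
  also have "\<dots> \<le> exp (y - Mc\<^sup>2 * ln (real N) / 128)"
  proof -
    have "x * y = Mc\<^sup>2 * ln (real N) / 32" unfolding x_def y_def using \<eta>_pos
      by (simp add: field_simps power2_eq_square)
    moreover have "x \<le> Mc\<^sup>2 * ln (real N) / 128"
    proof -
      have "1 / \<eta> \<le> Mc / 64" using \<eta> Mc \<eta>_pos by (simp add: field_simps)
      then have "Mc * ln (real N) / 2 * (1 / \<eta>) \<le> Mc * ln (real N) / 2 * (Mc / 64)"
        using Mc lnN by (intro mult_left_mono) auto
      then show ?thesis unfolding x_def by (simp add: power2_eq_square mult_ac)
    qed
    moreover have "1 + (Mc / 8)\<^sup>2 * ln (real N) - (x - 1) * (y - 1)
                     = Mc\<^sup>2 * ln (real N) / 64 - x * y + x + y"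
      by (simp add: algebra_simps power_divide)
    ultimately show ?thesis by simp
  qed
  also have "exp (y - Mc\<^sup>2 * ln (real N) / 128) = exp (y + - (Mc\<^sup>2 / 128) * ln (real N))" by simp
  also have "\<dots> = exp (Mc / 8 * \<eta> / 2) * real N powr (- (Mc\<^sup>2 / 128))"
    unfolding exp_add y_def using N by (simp add: powr_def)
  finally show ?thesis unfolding x_def y_def .
qed

lemma eventually_large_N:
  fixes c lam \<beta> e E z :: real
  assumes "0 \<le> c" "0 < lam" "0 < \<beta>"
  shows "\<forall>\<^sub>F N in sequentially. 3 \<le> real N
     \<and> real N * c / ((real N / ln (real N)) * sqrt (real N / ln (real N))) \<le> 1
     \<and> real N powr (1/3) \<le> sqrt (real N / ln (real N)) / lam
     \<and> z \<le> real N powr (1/3)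
     \<and> e * real N powr (- \<beta>) + E / real N \<le> 1/4"
proof (intro eventually_conj)
  show "\<forall>\<^sub>F N in sequentially. 3 \<le> real N" by real_asymp
  show "\<forall>\<^sub>F N in sequentially. real N * c / ((real N / ln (real N)) * sqrt (real N / ln (real N))) \<le> 1"
    using assms(1) by real_asymp
  show "\<forall>\<^sub>F N in sequentially. real N powr (1/3) \<le> sqrt (real N / ln (real N)) / lam"
    using assms(2) by real_asymp
  show "\<forall>\<^sub>F N in sequentially. z \<le> real N powr (1/3)" by real_asymp
  have "((\<lambda>N. real N powr (- \<beta>)) \<longlongrightarrow> 0) sequentially"
    using assms(3) by (intro tendsto_neg_powr filterlim_real_sequentially) simp
  then have "((\<lambda>N. e * real N powr (- \<beta>) + E * (1 / real N)) \<longlongrightarrow> e * 0 + E * 0) sequentially"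
    by (intro tendsto_intros lim_const_over_n)
  then have "\<forall>\<^sub>F N in sequentially. e * real N powr (- \<beta>) + E * (1 / real N) < 1/4"
    by (rule order_tendstoD) simp
  then show "\<forall>\<^sub>F N in sequentially. e * real N powr (- \<beta>) + E / real N \<le> 1/4"
    by eventually_elim simp
qed

lemma mult_div_H_le_powr:
  fixes H :: "real \<Rightarrow> real"
  assumes H: "\<And>x. x1 \<le> x \<Longrightarrow> x powr (3 * (\<beta> + 2)) \<le> H x" and \<beta>: "0 < \<beta>"
    and n: "0 < n" and b: "x1 \<le> n powr (1/3)" "n powr (1/3) \<le> b" and E: "0 \<le> E"
  shows "n * E / H b \<le> n powr (- \<beta>) * (E / n)"
proof -
  have "1 / 3 * (3 * (\<beta> + 2)) = \<beta> + 2" by simp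
  then have "n powr (\<beta> + 2) = (n powr (1/3)) powr (3 * (\<beta> + 2))" by (simp only: powr_powr)
  also have "\<dots> \<le> b powr (3 * (\<beta> + 2))" using b \<beta> by (intro powr_mono2) auto
  also have "\<dots> \<le> H b" using b by (intro H) linarith
  finally have Hb: "n powr (\<beta> + 2) \<le> H b" .
  moreover have "0 < n powr (\<beta> + 2)" using n by simp
  ultimately have "0 < H b" by linarith
  have "n * E / H b \<le> n * E / n powr (\<beta> + 2)"
    using Hb \<open>0 < H b\<close> n E by (intro divide_left_mono mult_nonneg_nonneg mult_pos_pos) auto
  also have "\<dots> = n powr (- \<beta>) * (E / n)"
    using n by (simp add: powr_add powr_minus field_simps power2_eq_square)
  finally show ?thesis .
qed

section \<open>The crossing estimate\<close>

locale centered_iid_int_seq = iid_int_seq +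
  assumes integrable_xi1: "integrable M (\<lambda>\<omega>. real_of_int (\<xi> 1 \<omega>))"
    and integrable_xi1_sq: "integrable M (\<lambda>\<omega>. (real_of_int (\<xi> 1 \<omega>))\<^sup>2)"
    and mean_xi1: "(\<integral>\<omega>. real_of_int (\<xi> 1 \<omega>) \<partial>M) = 0"
    and var_xi1: "(\<integral>\<omega>. (real_of_int (\<xi> 1 \<omega>))\<^sup>2 \<partial>M) = 1"
begin

lemma prob_reset_count_truncated_ge:
  assumes int3: "integrable M (\<lambda>\<omega>. \<bar>real_of_int (\<xi> 1 \<omega>)\<bar> ^ 3)"
    and b: "0 < b" and \<theta>: "0 < \<theta>" "\<theta> * b \<le> 1" and R: "0 < R"
  shows "measure M {\<omega> \<in> space M. K \<le> snd (reset_walk (\<lambda>j. truncate_int b (\<xi> j \<omega>)) R n)}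
           \<le> exp (\<theta> * (\<integral>\<omega>. \<bar>real_of_int (\<xi> 1 \<omega>)\<bar> ^ 3 \<partial>M) / b\<^sup>2 + \<theta>\<^sup>2) ^ n / cosh (\<theta> * R) ^ K"
proof -
  interpret truncated: iid_int_seq M "\<lambda>j \<omega>. truncate_int b (\<xi> j \<omega>)" by (rule iid_int_seq_compose)
  show ?thesis
  proof (rule truncated.prob_reset_count_ge[OF R])
    show "\<bar>real_of_int (truncate_int b (\<xi> j \<omega>))\<bar> \<le> b" for j \<omega>
      using b by (simp add: truncate_int_def)
    fix s :: real assume s: "\<bar>s\<bar> = \<bar>\<theta>\<bar>"
    have "(\<integral>\<omega>. exp (s * real_of_int (truncate_int b (\<xi> 1 \<omega>))) \<partial>M)
        = (\<integral>\<omega>. exp (s * (if \<bar>real_of_int (\<xi> 1 \<omega>)\<bar> \<le> b then real_of_int (\<xi> 1 \<omega>) else 0)) \<partial>M)"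
      by (intro Bochner_Integration.integral_cong) (auto simp: truncate_int_def)
    also have "\<dots> \<le> exp (\<bar>s\<bar> * (\<integral>\<omega>. \<bar>real_of_int (\<xi> 1 \<omega>)\<bar> ^ 3 \<partial>M) / b\<^sup>2 + s\<^sup>2)"
      using s \<theta> borel_measurable_seq[of 1 real_of_int]
      by (intro integral_exp_truncation_le integrable_xi1 integrable_xi1_sq int3 mean_xi1 var_xi1 b) auto
    finally show "(\<integral>\<omega>. exp (s * real_of_int (truncate_int b (\<xi> 1 \<omega>))) \<partial>M)
        \<le> exp (\<theta> * (\<integral>\<omega>. \<bar>real_of_int (\<xi> 1 \<omega>)\<bar> ^ 3 \<partial>M) / b\<^sup>2 + \<theta>\<^sup>2)"
      using s \<theta> by (simp add: power2_abs[of s, symmetric])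
  qed
qed

lemma prob_reset_count_ge_split:
  fixes H :: "real \<Rightarrow> real"
  assumes mono: "mono_on {0..} H" and pos: "\<And>x. 0 \<le> x \<Longrightarrow> 0 < H x"
    and cube: "\<forall>\<^sub>F x in at_top. x powr 3 \<le> H x"
    and H_int: "integrable M (\<lambda>\<omega>. H \<bar>real_of_int (\<xi> 1 \<omega>)\<bar>)"
    and b: "0 < b" and \<theta>: "0 < \<theta>" "\<theta> * b \<le> 1" and R: "0 < R"
  shows "measure M {\<omega> \<in> space M. K \<le> snd (reset_walk (\<lambda>j. \<xi> j \<omega>) R n)}
           \<le> exp (\<theta> * (\<integral>\<omega>. \<bar>real_of_int (\<xi> 1 \<omega>)\<bar> ^ 3 \<partial>M) / b\<^sup>2 + \<theta>\<^sup>2) ^ n / cosh (\<theta> * R) ^ K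
             + real n * (\<integral>\<omega>. H \<bar>real_of_int (\<xi> 1 \<omega>)\<bar> \<partial>M) / H b"
proof -
  let ?A = "{\<omega> \<in> space M. K \<le> snd (reset_walk (\<lambda>j. truncate_int b (\<xi> j \<omega>)) R n)}"
  let ?B = "{\<omega> \<in> space M. \<exists>j\<in>{1..n}. b < \<bar>real_of_int (\<xi> j \<omega>)\<bar>}"
  have "reset_walk (\<lambda>j. \<xi> j \<omega>) R n = reset_walk (\<lambda>j. truncate_int b (\<xi> j \<omega>)) R n" if "\<omega> \<notin> ?B" "\<omega> \<in> space M" for \<omega>
    using that by (intro reset_walk_cong) (auto simp: truncate_int_def not_less)
  then have "{\<omega> \<in> space M. K \<le> snd (reset_walk (\<lambda>j. \<xi> j \<omega>) R n)} \<subseteq> ?A \<union> ?B" by fastforce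
  moreover have "?B = (\<Union>j\<in>{1..n}. {\<omega> \<in> space M. b < \<bar>real_of_int (\<xi> j \<omega>)\<bar>})" by auto
  then have "?B \<in> sets M" using sets_seq_Collect by auto
  moreover have "?A \<in> sets M" using iid_int_seq.sets_reset_walk_Collect[OF iid_int_seq_compose] .
  ultimately have "measure M {\<omega> \<in> space M. K \<le> snd (reset_walk (\<lambda>j. \<xi> j \<omega>) R n)} \<le> measure M ?A + measure M ?B"
    by (meson finite_measure_mono measure_Un_le order_trans sets.Un)
  moreover have "integrable M (\<lambda>\<omega>. \<bar>real_of_int (\<xi> 1 \<omega>)\<bar> ^ 3)"
    using borel_measurable_seq[of 1 real_of_int] by (intro integrable_abs_cube[OF _ mono pos cube H_int]) auto
  then have "measure M ?A \<le> exp (\<theta> * (\<integral>\<omega>. \<bar>real_of_int (\<xi> 1 \<omega>)\<bar> ^ 3 \<partial>M) / b\<^sup>2 + \<theta>\<^sup>2) ^ n / cosh (\<theta> * R) ^ K"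
    by (intro prob_reset_count_truncated_ge b \<theta> R)
  moreover have "measure M ?B \<le> real n * (\<integral>\<omega>. H \<bar>real_of_int (\<xi> 1 \<omega>)\<bar> \<partial>M) / H b"
    by (rule prob_exists_big_jump_le[OF mono pos H_int less_imp_le[OF b]])
  ultimately show ?thesis by linarith
qed

lemma prob_reset_count_ge_explicit:
  fixes H :: "real \<Rightarrow> real" and Mc \<eta> :: real and N :: nat
  defines "T \<equiv> real N / ln (real N)" and "lam \<equiv> Mc / 8"
  assumes mono: "mono_on {0..} H" and pos: "\<And>x. 0 \<le> x \<Longrightarrow> 0 < H x"
    and cube: "\<forall>\<^sub>F x in at_top. x powr 3 \<le> H x"
    and H_int: "integrable M (\<lambda>\<omega>. H \<bar>real_of_int (\<xi> 1 \<omega>)\<bar>)"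
    and Mc: "0 < Mc" and \<eta>: "64 / Mc \<le> \<eta>" and N: "3 \<le> real N"
    and small: "real N * (lam ^ 3 * (\<integral>\<omega>. \<bar>real_of_int (\<xi> 1 \<omega>)\<bar> ^ 3 \<partial>M)) / (T * sqrt T) \<le> 1"
  shows "measure M {\<omega> \<in> space M. nat \<lfloor>Mc * ln (real N) / (2 * \<eta>)\<rfloor> \<le> snd (reset_walk (\<lambda>j. \<xi> j \<omega>) (\<eta> * sqrt T / 2) N)}
           \<le> exp (lam * \<eta> / 2) * real N powr (- (Mc\<^sup>2 / 128))
             + real N * (\<integral>\<omega>. H \<bar>real_of_int (\<xi> 1 \<omega>)\<bar> \<partial>M) / H (sqrt T / lam)"
proof -
  let ?K = "nat \<lfloor>Mc * ln (real N) / (2 * \<eta>)\<rfloor>" and ?m3 = "\<integral>\<omega>. \<bar>real_of_int (\<xi> 1 \<omega>)\<bar> ^ 3 \<partial>M"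
  have "0 < T" unfolding T_def using N by simp
  then have sq: "0 < sqrt T" by simp
  have lam: "0 < lam" unfolding lam_def using Mc by simp
  have "0 < 64 / Mc" using Mc by simp
  then have "0 < \<eta>" using \<eta> by linarith
  then have "measure M {\<omega> \<in> space M. ?K \<le> snd (reset_walk (\<lambda>j. \<xi> j \<omega>) (\<eta> * sqrt T / 2) N)}
      \<le> exp (lam / sqrt T * ?m3 / (sqrt T / lam)\<^sup>2 + (lam / sqrt T)\<^sup>2) ^ N / cosh (lam / sqrt T * (\<eta> * sqrt T / 2)) ^ ?K
          + real N * (\<integral>\<omega>. H \<bar>real_of_int (\<xi> 1 \<omega>)\<bar> \<partial>M) / H (sqrt T / lam)"
    using lam sq by (intro prob_reset_count_ge_split mono pos cube H_int) auto
  also have "lam / sqrt T * (\<eta> * sqrt T / 2) = lam * \<eta> / 2" using sq by simp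
  also have "exp (lam / sqrt T * ?m3 / (sqrt T / lam)\<^sup>2 + (lam / sqrt T)\<^sup>2) ^ N / cosh (lam * \<eta> / 2) ^ ?K
               \<le> exp (1 + lam\<^sup>2 * ln (real N)) / cosh (lam * \<eta> / 2) ^ ?K"
    using exp_truncated_mgf_pow_le[OF N lam small[unfolded T_def]] unfolding T_def
    by (intro divide_right_mono) auto
  also have "\<dots> \<le> exp (lam * \<eta> / 2) * real N powr (- (Mc\<^sup>2 / 128))"
    unfolding lam_def by (rule exp_div_cosh_pow_le[OF N Mc \<eta>])
  finally show ?thesis by simp
qed

theorem eventually_prob_reset_count_ge:
  fixes H :: "real \<Rightarrow> real" and Mc \<eta> :: real
  assumes mono: "mono_on {0..} H" and pos: "\<And>x. 0 \<le> x \<Longrightarrow> 0 < H x"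
    and growth: "\<And>L. \<forall>\<^sub>F x in at_top. x powr L \<le> H x"
    and H_int: "integrable M (\<lambda>\<omega>. H \<bar>real_of_int (\<xi> 1 \<omega>)\<bar>)"
    and Mc: "0 < Mc" and \<eta>: "64 / Mc \<le> \<eta>"
  shows "\<forall>\<^sub>F N in sequentially.
           measure M {\<omega> \<in> space M. nat \<lfloor>Mc * ln (real N) / (2 * \<eta>)\<rfloor>
                          \<le> snd (reset_walk (\<lambda>j. \<xi> j \<omega>) (\<eta> * sqrt (real N / ln (real N)) / 2) N)}
             \<le> real N powr (- (Mc\<^sup>2 / 256)) / 4"
proof -
  define \<beta> where "\<beta> = Mc\<^sup>2 / 256"
  define EH where "EH = (\<integral>\<omega>. H \<bar>real_of_int (\<xi> 1 \<omega>)\<bar> \<partial>M)"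
  have \<beta>: "0 < \<beta>" unfolding \<beta>_def using Mc by simp
  have lam: "0 < Mc / 8" using Mc by simp
  have EH: "0 \<le> EH" unfolding EH_def using pos by (intro Bochner_Integration.integral_nonneg less_imp_le) simp
  have c: "0 \<le> (Mc / 8) ^ 3 * (\<integral>\<omega>. \<bar>real_of_int (\<xi> 1 \<omega>)\<bar> ^ 3 \<partial>M)"
    using Mc by (intro mult_nonneg_nonneg Bochner_Integration.integral_nonneg) auto
  obtain x1 where x1: "\<And>x. x1 \<le> x \<Longrightarrow> x powr (3 * (\<beta> + 2)) \<le> H x"
    using growth[of "3 * (\<beta> + 2)"] unfolding eventually_at_top_linorder by blast
  show ?thesis
    using eventually_large_N[OF c lam \<beta>, where z = x1 and e = "exp (Mc / 8 * \<eta> / 2)" and E = EH]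
  proof eventually_elim
    case (elim N)
    let ?b = "sqrt (real N / ln (real N)) / (Mc / 8)"
    have "measure M {\<omega> \<in> space M. nat \<lfloor>Mc * ln (real N) / (2 * \<eta>)\<rfloor>
                          \<le> snd (reset_walk (\<lambda>j. \<xi> j \<omega>) (\<eta> * sqrt (real N / ln (real N)) / 2) N)}
          \<le> exp (Mc / 8 * \<eta> / 2) * real N powr (- (Mc\<^sup>2 / 128)) + real N * EH / H ?b"
      unfolding EH_def using elim by (intro prob_reset_count_ge_explicit mono pos growth H_int Mc \<eta>) auto
    also have "\<dots> \<le> exp (Mc / 8 * \<eta> / 2) * real N powr (- (Mc\<^sup>2 / 128)) + real N powr (- \<beta>) * (EH / real N)"
      using elim by (intro add_mono mult_div_H_le_powr[OF x1 \<beta> _ _ _ EH]) auto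
    also have "real N powr (- (Mc\<^sup>2 / 128)) = real N powr (- \<beta>) * real N powr (- \<beta>)"
      unfolding \<beta>_def by (simp add: powr_add[symmetric])
    also have "exp (Mc / 8 * \<eta> / 2) * (real N powr (- \<beta>) * real N powr (- \<beta>)) + real N powr (- \<beta>) * (EH / real N)
                 = real N powr (- \<beta>) * (exp (Mc / 8 * \<eta> / 2) * real N powr (- \<beta>) + EH / real N)"
      by (simp add: algebra_simps)
    also have "\<dots> \<le> real N powr (- \<beta>) * (1 / 4)"
      using elim by (intro mult_left_mono) auto
    finally show ?case unfolding \<beta>_def by simp
  qed
qed

end

section \<open>Coordinates of the two walks\<close>

lemma (in prob_space) indep_sets_reindex:
  assumes indep: "indep_sets F I" and inj: "inj_on f J" and J: "f ` J \<subseteq> I"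
  shows "indep_sets (\<lambda>j. F (f j)) J"
  unfolding indep_sets_def
proof (intro conjI ballI allI impI)
  show "F (f j) \<subseteq> events" if "j \<in> J" for j
    using indep J that unfolding indep_sets_def by blast
  fix K A assume K: "K \<subseteq> J" "K \<noteq> {}" "finite K" and A: "A \<in> (\<Pi> j\<in>K. F (f j))"
  define B where "B i = A (the_inv_into K f i)" for i
  have injK: "inj_on f K" using inj K(1) by (rule inj_on_subset)
  have B: "B (f j) = A j" if "j \<in> K" for j
    unfolding B_def using the_inv_into_f_f[OF injK that] by simp
  have "B \<in> (\<Pi> i\<in>f ` K. F i)" using A B by auto
  moreover have "f ` K \<subseteq> I" "f ` K \<noteq> {}" "finite (f ` K)" using K J by auto
  ultimately have "prob (\<Inter>i\<in>f ` K. B i) = (\<Prod>i\<in>f ` K. prob (B i))"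
    using indep unfolding indep_sets_def by blast
  then show "prob (\<Inter>j\<in>K. A j) = (\<Prod>j\<in>K. prob (A j))"
    using B by (simp add: prod.reindex[OF injK])
qed

lemma (in prob_space) indep_vars_reindex:
  assumes "indep_vars M' X I" "inj_on f J" "f ` J \<subseteq> I"
  shows "indep_vars (\<lambda>j. M' (f j)) (\<lambda>j. X (f j)) J"
  using assms indep_sets_reindex[of "\<lambda>i. {X i -` A \<inter> space M |A. A \<in> sets (M' i)}" I f J]
  unfolding indep_vars_def2 by auto

lemma (in prob_space) iid_int_seq_coordinate:
  fixes X :: "nat \<Rightarrow> nat \<Rightarrow> 'a \<Rightarrow> int \<times> int"
  assumes indep: "indep_vars (\<lambda>_. count_space UNIV) (\<lambda>(i, j). X i j) ({1,2} \<times> {1..})"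
    and ident: "\<And>j. 1 \<le> j \<Longrightarrow> distr M (count_space UNIV) (X i j) = distr M (count_space UNIV) (X i 1)"
    and i: "i \<in> {1,2}"
  shows "iid_int_seq M (\<lambda>j \<omega>. coordk_int k (X i j \<omega>))"
proof unfold_locales
  have indep_i: "indep_vars (\<lambda>_. count_space UNIV) (\<lambda>j. X i j) {1..}"
    using indep_vars_reindex[OF indep, of "\<lambda>j. (i, j)" "{1..}"] i by (auto simp: inj_on_def)
  then show "indep_vars (\<lambda>_. count_space UNIV) (\<lambda>j \<omega>. coordk_int k (X i j \<omega>)) {1..}"
    by (rule indep_vars_compose2) simp
  have meas: "X i j \<in> measurable M (count_space UNIV)" if "1 \<le> j" for j
    using indep_i that unfolding indep_vars_def by auto
  have distr_coord: "distr M (count_space UNIV) (\<lambda>\<omega>. coordk_int k (X i j \<omega>))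
      = distr (distr M (count_space UNIV) (X i j)) (count_space UNIV) (coordk_int k)" if "1 \<le> j" for j
    using distr_distr[OF _ meas[OF that], of "coordk_int k" "count_space UNIV"] by (simp add: comp_def)
  show "distr M (count_space UNIV) (\<lambda>\<omega>. coordk_int k (X i j \<omega>))
          = distr M (count_space UNIV) (\<lambda>\<omega>. coordk_int k (X i 1 \<omega>))" if "1 \<le> j" for j
    using distr_coord[OF that] distr_coord[of 1] by (simp add: ident[OF that])
qed

lemma (in prob_space) integrable_H_abs_coordk_int:
  fixes H :: "real \<Rightarrow> real" and Y :: "'a \<Rightarrow> int \<times> int"
  assumes Y: "Y \<in> measurable M (count_space UNIV)"
    and mono: "mono_on {0..} H" and pos: "\<And>x. 0 \<le> x \<Longrightarrow> 0 < H x"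
    and H_int: "integrable M (\<lambda>\<omega>. H (norm (real_of_int (fst (Y \<omega>)), real_of_int (snd (Y \<omega>)))))"
  shows "integrable M (\<lambda>\<omega>. H \<bar>real_of_int (coordk_int k (Y \<omega>))\<bar>)"
proof (rule Bochner_Integration.integrable_bound[OF H_int])
  show "(\<lambda>\<omega>. H \<bar>real_of_int (coordk_int k (Y \<omega>))\<bar>) \<in> borel_measurable M"
    using measurable_compose[OF Y, of "\<lambda>p. H \<bar>real_of_int (coordk_int k p)\<bar>" borel] by simp
  have "H \<bar>real_of_int (coordk_int k p)\<bar> \<le> H (norm (real_of_int (fst p), real_of_int (snd p)))" for p
    using abs_coordk_int_le_norm by (intro mono_onD[OF mono]) auto
  then show "AE \<omega> in M. norm (H \<bar>real_of_int (coordk_int k (Y \<omega>))\<bar>)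
               \<le> norm (H (norm (real_of_int (fst (Y \<omega>)), real_of_int (snd (Y \<omega>)))))"
    using pos by (intro AE_I2) (simp add: less_imp_le)
qed

lemma Ctot_gt_imp_reset_count:
  assumes N: "2 \<le> N" and \<eta>: "0 < \<eta>" and x: "0 \<le> x" and C: "4 * x < real (Ctot X \<eta> N \<omega>)"
  shows "\<exists>i\<in>{1,2}. \<exists>k\<in>{1,2}.
           nat \<lfloor>x\<rfloor> \<le> snd (reset_walk (\<lambda>j. coordk_int k (X i j \<omega>)) (\<eta> * sqrt (real N / ln (real N)) / 2) N)"
proof -
  let ?c = "\<lambda>i k. crossings (\<lambda>m. rwalk (real N / ln (real N)) (X i) m \<omega>) \<eta> k N"
  have "\<exists>i\<in>{1,2}. \<exists>k\<in>{1,2}. x < real (?c i k)"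
  proof (rule ccontr)
    assume "\<not> ?thesis"
    then have "(\<Sum>k\<in>{1,2}. \<Sum>i\<in>{1,2}. real (?c i k)) \<le> (\<Sum>k\<in>{1::nat,2}. \<Sum>i\<in>{1::nat,2}. x)"
      by (intro sum_mono) (auto simp: not_less)
    then have "real (Ctot X \<eta> N \<omega>) \<le> 4 * x" unfolding Ctot_def of_nat_sum by simp
    with C show False by simp
  qed
  then obtain i k where ik: "i \<in> {1,2}" "k \<in> {1,2}" and c: "x < real (?c i k)" by blast
  have "real (nat \<lfloor>x\<rfloor>) \<le> x" using x by simp
  then have "real (nat \<lfloor>x\<rfloor>) < real (?c i k)" using c by linarith
  then have "nat \<lfloor>x\<rfloor> < ?c i k" by (simp only: of_nat_less_iff)
  moreover have "0 < real N / ln (real N)" using N by simp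
  ultimately have "nat \<lfloor>x\<rfloor> \<le> snd (reset_walk (\<lambda>j. coordk_int k (X i j \<omega>)) (\<eta> * sqrt (real N / ln (real N)) / 2) N)"
    using crossings_le_reset_count[OF _ \<eta>] by (simp add: Suc_le_eq)
  with ik show ?thesis by blast
qed

lemma (in prob_space) prob_Ctot_gt_le:
  fixes X :: "nat \<Rightarrow> nat \<Rightarrow> 'a \<Rightarrow> int \<times> int"
  assumes seq: "\<And>i k. i \<in> {1,2} \<Longrightarrow> iid_int_seq M (\<lambda>j \<omega>. coordk_int k (X i j \<omega>))"
    and N: "2 \<le> N" and \<eta>: "0 < \<eta>" and Mc: "0 < Mc"
    and bound: "\<forall>i\<in>{1,2}. \<forall>k\<in>{1,2}. measure M {\<omega> \<in> space M. nat \<lfloor>Mc * ln (real N) / (2 * \<eta>)\<rfloor>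
                   \<le> snd (reset_walk (\<lambda>j. coordk_int k (X i j \<omega>)) (\<eta> * sqrt (real N / ln (real N)) / 2) N)} \<le> p"
  shows "measure M {\<omega> \<in> space M. real (Ctot X \<eta> N \<omega>) > 2 * Mc * ln (real N) / \<eta>} \<le> 4 * p"
proof -
  define x where "x = Mc * ln (real N) / (2 * \<eta>)"
  define A where "A ik = {\<omega> \<in> space M. nat \<lfloor>x\<rfloor>
              \<le> snd (reset_walk (\<lambda>j. coordk_int (snd ik) (X (fst ik) j \<omega>)) (\<eta> * sqrt (real N / ln (real N)) / 2) N)}"
    for ik :: "nat \<times> nat"
  let ?I = "{1::nat, 2} \<times> {1::nat, 2}"
  have A_sets: "A ik \<in> sets M" if "ik \<in> ?I" for ik
    unfolding A_def using that by (intro iid_int_seq.sets_reset_walk_Collect seq) auto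
  have x: "0 \<le> x" unfolding x_def using Mc \<eta> N by simp
  have "{\<omega> \<in> space M. real (Ctot X \<eta> N \<omega>) > 2 * Mc * ln (real N) / \<eta>} \<subseteq> (\<Union>ik\<in>?I. A ik)"
  proof
    fix \<omega> assume "\<omega> \<in> {\<omega> \<in> space M. real (Ctot X \<eta> N \<omega>) > 2 * Mc * ln (real N) / \<eta>}"
    then have \<omega>: "\<omega> \<in> space M" and C: "4 * x < real (Ctot X \<eta> N \<omega>)" unfolding x_def by auto
    obtain i k where "i \<in> {1,2}" "k \<in> {1,2}" and "nat \<lfloor>x\<rfloor>
        \<le> snd (reset_walk (\<lambda>j. coordk_int k (X i j \<omega>)) (\<eta> * sqrt (real N / ln (real N)) / 2) N)"
      using Ctot_gt_imp_reset_count[OF N \<eta> x C] by blast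
    then show "\<omega> \<in> (\<Union>ik\<in>?I. A ik)" using \<omega> unfolding A_def by (intro UN_I[of "(i, k)"]) auto
  qed
  then have "measure M {\<omega> \<in> space M. real (Ctot X \<eta> N \<omega>) > 2 * Mc * ln (real N) / \<eta>}
               \<le> measure M (\<Union>ik\<in>?I. A ik)"
    using A_sets by (intro finite_measure_mono) auto
  also have "\<dots> \<le> (\<Sum>ik\<in>?I. measure M (A ik))"
    using A_sets by (intro finite_measure_subadditive_finite) auto
  also have "\<dots> \<le> (\<Sum>ik\<in>?I. p)"
    using bound unfolding A_def x_def by (intro sum_mono) auto
  finally show ?thesis by simp
qed

lemma Limsup_elog_le_powr:
  fixes p :: "'b \<Rightarrow> nat \<Rightarrow> real"
  assumes nonneg: "\<And>\<eta> N. 0 \<le> p \<eta> N"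
    and bound: "\<forall>\<^sub>F \<eta> in F. \<forall>\<^sub>F N in sequentially. p \<eta> N \<le> real N powr (- \<beta>)"
  shows "Limsup F (\<lambda>\<eta>. Limsup sequentially (\<lambda>N. ereal (1 / ln (real N)) * elog (p \<eta> N))) \<le> ereal (- \<beta>)"
proof (rule Limsup_bounded)
  show "\<forall>\<^sub>F \<eta> in F. Limsup sequentially (\<lambda>N. ereal (1 / ln (real N)) * elog (p \<eta> N)) \<le> ereal (- \<beta>)"
    using bound
  proof eventually_elim
    case (elim \<eta>)
    show ?case
    proof (rule Limsup_bounded)
      show "\<forall>\<^sub>F N in sequentially. ereal (1 / ln (real N)) * elog (p \<eta> N) \<le> ereal (- \<beta>)"
        using elim eventually_ge_at_top[of "2::nat"]
      proof eventually_elim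
        case (elim N)
        then have lnN: "0 < ln (real N)" by simp
        show ?case
        proof (cases "p \<eta> N = 0")
          case False
          then have "ln (p \<eta> N) \<le> ln (real N powr (- \<beta>))"
            using elim nonneg[of \<eta> N] by (subst ln_le_cancel_iff) auto
          also have "\<dots> = - \<beta> * ln (real N)" using elim by (simp add: ln_powr)
          finally show ?thesis using False lnN by (simp add: elog_def divide_le_eq mult.commute)
        qed (use lnN in \<open>simp add: elog_def\<close>)
      qed
    qed
  qed
qed

lemma (in prob_space) eventually_prob_Ctot_gt_le:
  fixes X :: "nat \<Rightarrow> nat \<Rightarrow> 'a \<Rightarrow> int \<times> int" and H :: "real \<Rightarrow> real"
  assumes seq: "\<And>i k. i \<in> {1,2} \<Longrightarrow> centered_iid_int_seq M (\<lambda>j \<omega>. coordk_int k (X i j \<omega>))"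
    and mono: "mono_on {0..} H" and pos: "\<And>x. 0 \<le> x \<Longrightarrow> 0 < H x"
    and growth: "\<And>L. \<forall>\<^sub>F x in at_top. x powr L \<le> H x"
    and H_int: "\<And>i k. i \<in> {1,2} \<Longrightarrow> integrable M (\<lambda>\<omega>. H \<bar>real_of_int (coordk_int k (X i 1 \<omega>))\<bar>)"
    and Mc: "0 < Mc"
  shows "\<forall>\<^sub>F \<eta> in at_top. \<forall>\<^sub>F N in sequentially.
           measure M {\<omega> \<in> space M. real (Ctot X \<eta> N \<omega>) > 2 * Mc * ln (real N) / \<eta>} \<le> real N powr (- (Mc\<^sup>2 / 256))"
  using eventually_ge_at_top[of "64 / Mc"]
proof eventually_elim
  case (elim \<eta>)
  have "0 < 64 / Mc" using Mc by simp
  then have \<eta>: "0 < \<eta>" using elim by linarith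
  have "\<forall>\<^sub>F N in sequentially. \<forall>i\<in>{1,2}. \<forall>k\<in>{1,2}. measure M {\<omega> \<in> space M. nat \<lfloor>Mc * ln (real N) / (2 * \<eta>)\<rfloor>
          \<le> snd (reset_walk (\<lambda>j. coordk_int k (X i j \<omega>)) (\<eta> * sqrt (real N / ln (real N)) / 2) N)}
        \<le> real N powr (- (Mc\<^sup>2 / 256)) / 4"
    using centered_iid_int_seq.eventually_prob_reset_count_ge[OF seq mono pos growth H_int Mc elim]
    by (intro eventually_ball_finite ballI) auto
  then show ?case using eventually_ge_at_top[of 2]
  proof eventually_elim
    case (elim N)
    then have "measure M {\<omega> \<in> space M. real (Ctot X \<eta> N \<omega>) > 2 * Mc * ln (real N) / \<eta>}
                 \<le> 4 * (real N powr (- (Mc\<^sup>2 / 256)) / 4)"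
      by (intro prob_Ctot_gt_le[OF centered_iid_int_seq.axioms(1)[OF seq] _ \<eta> Mc]) auto
    then show ?case by simp
  qed
qed

theorem lemma3p4:
  fixes M :: "'a measure"
    and X :: "nat \<Rightarrow> nat \<Rightarrow> 'a \<Rightarrow> int \<times> int"
    and H :: "real \<Rightarrow> real"
  assumes P: "prob_space M"
    and meas: "\<And>i j. i \<in> {1,2} \<Longrightarrow> j \<ge> 1 \<Longrightarrow> X i j \<in> measurable M (count_space UNIV)"
    and indep: "prob_space.indep_vars M (\<lambda>_. count_space UNIV) (\<lambda>(i,j). X i j) ({1,2} \<times> {1..})"
    and ident: "\<And>i j. i \<in> {1,2} \<Longrightarrow> j \<ge> 1 \<Longrightarrow>
                  distr M (count_space UNIV) (X i j) = distr M (count_space UNIV) (X i 1)"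
    and int1: "\<And>i. i \<in> {1,2} \<Longrightarrow> integrable M (\<lambda>\<omega>. real_of_int (fst (X i 1 \<omega>)))"
    and int2: "\<And>i. i \<in> {1,2} \<Longrightarrow> integrable M (\<lambda>\<omega>. real_of_int (snd (X i 1 \<omega>)))"
    and int11: "\<And>i. i \<in> {1,2} \<Longrightarrow> integrable M (\<lambda>\<omega>. (real_of_int (fst (X i 1 \<omega>)))^2)"
    and int22: "\<And>i. i \<in> {1,2} \<Longrightarrow> integrable M (\<lambda>\<omega>. (real_of_int (snd (X i 1 \<omega>)))^2)"
    and int12: "\<And>i. i \<in> {1,2} \<Longrightarrow>
                  integrable M (\<lambda>\<omega>. real_of_int (fst (X i 1 \<omega>)) * real_of_int (snd (X i 1 \<omega>)))"
    and mean1: "\<And>i. i \<in> {1,2} \<Longrightarrow> (\<integral>\<omega>. real_of_int (fst (X i 1 \<omega>)) \<partial>M) = 0"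
    and mean2: "\<And>i. i \<in> {1,2} \<Longrightarrow> (\<integral>\<omega>. real_of_int (snd (X i 1 \<omega>)) \<partial>M) = 0"
    and cov11: "\<And>i. i \<in> {1,2} \<Longrightarrow> (\<integral>\<omega>. (real_of_int (fst (X i 1 \<omega>)))^2 \<partial>M) = 1"
    and cov22: "\<And>i. i \<in> {1,2} \<Longrightarrow> (\<integral>\<omega>. (real_of_int (snd (X i 1 \<omega>)))^2 \<partial>M) = 1"
    and cov12: "\<And>i. i \<in> {1,2} \<Longrightarrow>
                  (\<integral>\<omega>. real_of_int (fst (X i 1 \<omega>)) * real_of_int (snd (X i 1 \<omega>)) \<partial>M) = 0"
    and H_cont: "continuous_on {0..} H"
    and H_mono: "mono_on {0..} H"
    and H_pos: "\<And>x. x \<ge> 0 \<Longrightarrow> H x > 0"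
    and H_growth: "filterlim (\<lambda>n::nat. ln (H (real n)) / ln (real n)) at_top sequentially"
    and H_mom: "\<And>i. i \<in> {1,2} \<Longrightarrow>
                  integrable M (\<lambda>\<omega>. H (norm (real_of_int (fst (X i 1 \<omega>)), real_of_int (snd (X i 1 \<omega>)))))"
  shows "\<exists>C :: real \<Rightarrow> real. filterlim C at_top at_top \<and>
           (\<forall>Mc > 0. Limsup at_top (\<lambda>\<eta>::real. Limsup sequentially (\<lambda>n::nat.
              ereal (1 / ln (real n)) *
              elog (measure M {\<omega> \<in> space M. real (Ctot X \<eta> n \<omega>) > 2 * Mc * ln (real n) / \<eta>})))
            \<le> ereal (- C Mc))"
proof -
  interpret prob_space M by (rule P)
  have seq: "centered_iid_int_seq M (\<lambda>j \<omega>. coordk_int k (X i j \<omega>))" if "i \<in> {1,2}" for i k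
  proof (rule centered_iid_int_seq.intro)
    show "iid_int_seq M (\<lambda>j \<omega>. coordk_int k (X i j \<omega>))"
      using indep ident[OF that] that by (rule iid_int_seq_coordinate)
    show "centered_iid_int_seq_axioms M (\<lambda>j \<omega>. coordk_int k (X i j \<omega>))"
      unfolding centered_iid_int_seq_axioms_def coordk_int_def
      using that int1 int2 int11 int22 mean1 mean2 cov11 cov22 by (cases "k = 1") simp_all
  qed
  have H_coord: "integrable M (\<lambda>\<omega>. H \<bar>real_of_int (coordk_int k (X i 1 \<omega>))\<bar>)" if "i \<in> {1,2}" for i k
    using meas[OF that, of 1] H_mono H_pos H_mom[OF that] by (rule integrable_H_abs_coordk_int) simp
  note bound = eventually_prob_Ctot_gt_le[OF seq H_mono H_pos
      eventually_powr_le_superpolynomial[OF H_mono H_pos H_growth] H_coord]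
  show ?thesis
  proof (intro exI[of _ "\<lambda>x. x\<^sup>2 / 256"] conjI allI impI)
    show "filterlim (\<lambda>x::real. x\<^sup>2 / 256) at_top at_top" by real_asymp
  qed (rule Limsup_elog_le_powr[OF _ bound], simp_all)
qed

end
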